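(* Let $V\subseteq\mathcal V$ be finite, $\mathbb E,\mathbb F\in\mathit{NProg}(V)$, and $V'\subseteq\mathcal V$ with $|V'|=|V|$ and $V\cap V'=\emptyset$. Then (1) $\mathbb E\le_T^s\mathbb F$ iff $\mathbb F\models_{tot}(\mathbb E^\dagger(\{\Omega_{V,V'}\}),\{\Omega_{V,V'}\})$; (2) $\mathbb E\le_P^s\mathbb F$ iff $\mathbb F\models_{par}(I-\mathbb E^\dagger(\{\Omega_{V,V'}\}),\{I-\Omega_{V,V'}\})$.
   Context: $\mathcal V$ is a countably infinite set of qubit variables; $\mathcal H_V=\bigotimes_{q\in V}\mathcal H_q$. $\mathcal D(\mathcal H)$: partial density operators; $\mathcal P(\mathcal H)$: effects. $\mathit{DProg}(V)$: completely positive trace-nonincreasing super-operators on $\mathcal L(\mathcal H_V)$; $\mathit{NProg}(V)$: nonempty convex closed subsets of $\mathit{DProg}(V)$. Operators/super-operators on subsystems are implicitly extended by tensoring with identities. $\mathcal E^\dagger$ is the adjoint (${\rm tr}(\mathcal E(A)B)={\rm tr}(A\mathcal E^\dagger(B))$); for a set of effects $\Psi$, $\mathbb E^\dagger(\Psi)=\{\mathcal E^\dagger(N):\mathcal E\in\mathbb E,N\in\Psi\}$ (this is $wp^s.\mathbb E.\Psi$), and $I-\Theta=\{I-M:M\in\Theta\}$ (so $I-\mathbb E^\dagger(I-\Psi)=wlp^s.\mathbb E.\Psi$). With $d=2^{|V|}$, $\Omega_{V,V'}=|\omega\rangle\langle\omega|$, $|\omega\rangle=\frac1{\sqrt d}\sum_i|i\rangle_V|i\rangle_{V'}$,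 and $I$ is the identity on $\mathcal H_V\otimes\mathcal H_{V'}$. $\mathrm{Exp}_{dem}(\rho\models\Theta)=\inf_{M\in\Theta}{\rm tr}(M\rho)$ (${\rm tr}(\rho)$ if $\Theta=\emptyset$). $\mathbb E\models_{tot}(\Theta,\Psi)$ iff for all finite $X\supseteq V\cup W$ and $\rho\in\mathcal D(\mathcal H_X)$, $\mathrm{Exp}_{dem}(\rho\models\Theta)\le\inf_{\mathcal E\in\mathbb E}\mathrm{Exp}_{dem}(\mathcal E(\rho)\models\Psi)$; $\mathbb E\models_{par}(\Theta,\Psi)$ iff for all such $X,\rho$, $\mathrm{Exp}_{dem}(\rho\models\Theta)\le\inf_{\mathcal E\in\mathbb E}[\mathrm{Exp}_{dem}(\mathcal E(\rho)\models\Psi)+{\rm tr}(\rho)-{\rm tr}(\mathcal E(\rho))]$. $\mathbb E\le_T^s\mathbb F$ (resp. $\le_P^s$) iff for every finite $W$ and all $\Theta,\Psi\subseteq\mathcal P(\mathcal H_W)$, $\mathbb E\models_{tot}(\Theta,\Psi)\Rightarrow\mathbb F\models_{tot}(\Theta,\Psi)$ (resp. with $\models_{par}$). *)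

theory Defs
  imports Complex_Main
begin

text \<open>A computational-basis state of the register X is a Boolean assignment
that is False outside X.  Operators on H_X are complex matrices indexed by
such basis states; entries outside the basis of X are required to be 0.\<close>

type_synonym qvar = nat
type_synonym bst = "qvar \<Rightarrow> bool"
type_synonym qop = "bst \<Rightarrow> bst \<Rightarrow> complex"
type_synonym sop = "qop \<Rightarrow> qop"

definition basis :: "qvar set \<Rightarrow> bst set" where
  "basis X = {s. \<forall>q. q \<notin> X \<longrightarrow> \<not> s q}"

definition restr :: "qvar set \<Rightarrow> bst \<Rightarrow> bst" where
  "restr V s = (\<lambda>q. if q \<in> V then s q else False)"

definition merge :: "qvar set \<Rightarrow> bst \<Rightarrow> bst \<Rightarrow> bst" where
  "merge V s t = (\<lambda>q. if q \<in> V then s q else t q)"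

definition op_on :: "qvar set \<Rightarrow> qop \<Rightarrow> bool" where
  "op_on X A \<longleftrightarrow> (\<forall>s t. s \<notin> basis X \<or> t \<notin> basis X \<longrightarrow> A s t = 0)"

definition zero_op :: qop where
  "zero_op = (\<lambda>s t. 0)"

definition ident :: "qvar set \<Rightarrow> qop" where
  "ident X = (\<lambda>s t. if s \<in> basis X \<and> s = t then 1 else 0)"

definition ebasis :: "qvar set \<Rightarrow> bst \<Rightarrow> bst \<Rightarrow> qop" where
  "ebasis X u v = (\<lambda>s t. if u \<in> basis X \<and> v \<in> basis X \<and> s = u \<and> t = v then 1 else 0)"

definition mult :: "qvar set \<Rightarrow> qop \<Rightarrow> qop \<Rightarrow> qop" where
  "mult X A B = (\<lambda>s t. \<Sum>u\<in>basis X. A s u * B u t)"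

definition trace :: "qvar set \<Rightarrow> qop \<Rightarrow> complex" where
  "trace X A = (\<Sum>s\<in>basis X. A s s)"

definition minus_op :: "qop \<Rightarrow> qop \<Rightarrow> qop" where
  "minus_op A B = (\<lambda>s t. A s t - B s t)"

definition qform :: "qvar set \<Rightarrow> qop \<Rightarrow> (bst \<Rightarrow> complex) \<Rightarrow> complex" where
  "qform X A \<psi> = (\<Sum>s\<in>basis X. \<Sum>t\<in>basis X. cnj (\<psi> s) * A s t * \<psi> t)"

definition psd :: "qvar set \<Rightarrow> qop \<Rightarrow> bool" where
  "psd X A \<longleftrightarrow> op_on X A \<and> (\<forall>\<psi>. Im (qform X A \<psi>) = 0 \<and> 0 \<le> Re (qform X A \<psi>))"

definition pdo :: "qvar set \<Rightarrow> qop \<Rightarrow> bool" where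
  "pdo X \<rho> \<longleftrightarrow> psd X \<rho> \<and> Re (trace X \<rho>) \<le> 1"

definition effect :: "qvar set \<Rightarrow> qop \<Rightarrow> bool" where
  "effect X M \<longleftrightarrow> psd X M \<and> psd X (minus_op (ident X) M)"

text \<open>Implicit extension of an operator on H_V to H_X (V \<subseteq> X): A \<otimes> I.\<close>
definition ext :: "qvar set \<Rightarrow> qvar set \<Rightarrow> qop \<Rightarrow> qop" where
  "ext V X A = (\<lambda>s t. if s \<in> basis X \<and> t \<in> basis X \<and> (\<forall>q\<in>X - V. s q = t q)
                        then A (restr V s) (restr V t) else 0)"

text \<open>Implicit extension of a super-operator on L(H_V) to L(H_X) (V \<subseteq> X):
  E \<otimes> id, defined blockwise: ((E\<otimes>id) \<rho>)(s,t) = E(\<rho>_{ab})(s|V,t|V) where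
  a,b are the parts of s,t outside V.\<close>
definition superext :: "qvar set \<Rightarrow> qvar set \<Rightarrow> sop \<Rightarrow> sop" where
  "superext V X E \<rho> = (\<lambda>s t. if s \<in> basis X \<and> t \<in> basis X then
      E (\<lambda>s' t'. if s' \<in> basis V \<and> t' \<in> basis V then \<rho> (merge V s' s) (merge V t' t) else 0)
        (restr V s) (restr V t)
    else 0)"

text \<open>Adjoint of a super-operator G on L(H_X): tr(G(A) B) = tr(A G^dagger(B)).\<close>
definition sadj :: "qvar set \<Rightarrow> sop \<Rightarrow> sop" where
  "sadj X G B = (\<lambda>v u. if v \<in> basis X \<and> u \<in> basis X
                        then trace X (mult X (G (ebasis X u v)) B) else 0)"

text \<open>A super-operator is represented by a function that is linear on L(H_V),
  maps L(H_V) to L(H_V), and is normalised to 0 outside L(H_V).\<close>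
definition DProg :: "qvar set \<Rightarrow> sop set" where
  "DProg V = {E.
     (\<forall>A. \<not> op_on V A \<longrightarrow> E A = zero_op) \<and>
     (\<forall>A. op_on V A \<longrightarrow> op_on V (E A)) \<and>
     (\<forall>A B. op_on V A \<and> op_on V B \<longrightarrow> E (\<lambda>s t. A s t + B s t) = (\<lambda>s t. E A s t + E B s t)) \<and>
     (\<forall>A c. op_on V A \<longrightarrow> E (\<lambda>s t. c * A s t) = (\<lambda>s t. c * E A s t)) \<and>
     (\<forall>X \<rho>. finite X \<and> V \<subseteq> X \<and> psd X \<rho> \<longrightarrow> psd X (superext V X E \<rho>)) \<and>
     (\<forall>\<rho>. psd V \<rho> \<longrightarrow> Re (trace V (E \<rho>)) \<le> Re (trace V \<rho>))}"

definition sop_convex :: "sop set \<Rightarrow> bool" where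
  "sop_convex S \<longleftrightarrow> (\<forall>E\<in>S. \<forall>F\<in>S. \<forall>p::real. 0 \<le> p \<and> p \<le> 1 \<longrightarrow>
      (\<lambda>A s t. complex_of_real p * E A s t + complex_of_real (1 - p) * F A s t) \<in> S)"

text \<open>Closedness (finite-dimensional, so w.r.t. entrywise convergence).\<close>
definition sop_closed :: "sop set \<Rightarrow> bool" where
  "sop_closed S \<longleftrightarrow> (\<forall>f E. (\<forall>n. f n \<in> S) \<and> (\<forall>A s t. (\<lambda>n. f n A s t) \<longlonglongrightarrow> E A s t)
      \<longrightarrow> E \<in> S)"

definition NProg :: "qvar set \<Rightarrow> sop set set" where
  "NProg V = {S. S \<noteq> {} \<and> S \<subseteq> DProg V \<and> sop_convex S \<and> sop_closed S}"

definition exp_dem :: "qvar set \<Rightarrow> qvar set \<Rightarrow> qop set \<Rightarrow> qop \<Rightarrow> real" where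
  "exp_dem W X \<Theta> \<rho> = (if \<Theta> = {} then Re (trace X \<rho>)
      else (INF M\<in>\<Theta>. Re (trace X (mult X (ext W X M) \<rho>))))"

definition models_tot :: "qvar set \<Rightarrow> qvar set \<Rightarrow> sop set \<Rightarrow> qop set \<Rightarrow> qop set \<Rightarrow> bool" where
  "models_tot V W E \<Theta> \<Psi> \<longleftrightarrow> (\<forall>X \<rho>. finite X \<and> V \<union> W \<subseteq> X \<and> pdo X \<rho> \<longrightarrow>
      exp_dem W X \<Theta> \<rho> \<le> (INF \<E>\<in>E. exp_dem W X \<Psi> (superext V X \<E> \<rho>)))"

definition models_par :: "qvar set \<Rightarrow> qvar set \<Rightarrow> sop set \<Rightarrow> qop set \<Rightarrow> qop set \<Rightarrow> bool" where
  "models_par V W E \<Theta> \<Psi> \<longleftrightarrow> (\<forall>X \<rho>. finite X \<and> V \<union> W \<subseteq> X \<and> pdo X \<rho> \<longrightarrow>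
      exp_dem W X \<Theta> \<rho> \<le> (INF \<E>\<in>E. exp_dem W X \<Psi> (superext V X \<E> \<rho>)
          + Re (trace X \<rho>) - Re (trace X (superext V X \<E> \<rho>))))"

definition refines_T :: "qvar set \<Rightarrow> sop set \<Rightarrow> sop set \<Rightarrow> bool" where
  "refines_T V E F \<longleftrightarrow> (\<forall>W \<Theta> \<Psi>. finite W \<and> \<Theta> \<subseteq> Collect (effect W) \<and> \<Psi> \<subseteq> Collect (effect W)
      \<longrightarrow> models_tot V W E \<Theta> \<Psi> \<longrightarrow> models_tot V W F \<Theta> \<Psi>)"

definition refines_P :: "qvar set \<Rightarrow> sop set \<Rightarrow> sop set \<Rightarrow> bool" where
  "refines_P V E F \<longleftrightarrow> (\<forall>W \<Theta> \<Psi>. finite W \<and> \<Theta> \<subseteq> Collect (effect W) \<and> \<Psi> \<subseteq> Collect (effect W)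
      \<longrightarrow> models_par V W E \<Theta> \<Psi> \<longrightarrow> models_par V W F \<Theta> \<Psi>)"

definition sadj_set :: "qvar set \<Rightarrow> qvar set \<Rightarrow> sop set \<Rightarrow> qop set \<Rightarrow> qop set" where
  "sadj_set V X E \<Psi> = {sadj X (superext V X \<E>) N | \<E> N. \<E> \<in> E \<and> N \<in> \<Psi>}"

definition compl_set :: "qvar set \<Rightarrow> qop set \<Rightarrow> qop set" where
  "compl_set X \<Theta> = (\<lambda>M. minus_op (ident X) M) ` \<Theta>"

text \<open>Maximally entangled state \<Omega>_{V,V'}: the i-th basis state of H_V is identified
  with the i-th basis state of H_{V'} via the order-preserving bijection V \<rightarrow> V'.\<close>
definition pairvar :: "qvar set \<Rightarrow> qvar set \<Rightarrow> qvar \<Rightarrow> qvar" where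
  "pairvar V V' q = sorted_list_of_set V' ! (LEAST i. sorted_list_of_set V ! i = q)"

definition omega_vec :: "qvar set \<Rightarrow> qvar set \<Rightarrow> bst \<Rightarrow> complex" where
  "omega_vec V V' s = (if s \<in> basis (V \<union> V') \<and> (\<forall>q\<in>V. s q = s (pairvar V V' q))
      then 1 / sqrt (2 ^ card V) else 0)"

definition Omega :: "qvar set \<Rightarrow> qvar set \<Rightarrow> qop" where
  "Omega V V' = (\<lambda>s t. omega_vec V V' s * cnj (omega_vec V V' t))"

end

theory Submission
  imports Defs
begin

text \<open>The key is a Choi--Jamiolkowski representation.  Let \<open>\<Omega>\<close> be the maximally entangled
state on \<open>V \<union> V'\<close>.  For any register \<open>X \<supseteq> V\<close>, state \<open>\<rho>\<close> on \<open>X\<close> and effect \<open>N\<close> on \<open>W \<subseteq> X\<close>,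
the coefficients of \<open>\<rho>\<close> and \<open>N\<close> against the matrix units of \<open>V\<close> assemble into a partial density
operator \<open>\<sigma>\<close> on \<open>V \<union> V'\<close> and a constant \<open>c > 0\<close> such that
\<open>tr (N (e \<otimes> id)(\<rho>)) = c \<cdot> tr (\<Omega> (e \<otimes> id)(\<sigma>))\<close> for every program \<open>e\<close> on \<open>V\<close>.
Hence the single correctness formula \<open>(E\<^sup>\<dagger>(\<Omega>), \<Omega>)\<close>, which \<open>E\<close> satisfies by construction, controls
all others: if \<open>F\<close> satisfies it, then \<open>inf\<^sub>e\<^sub>\<in>\<^sub>E tr (N e(\<rho>)) \<le> tr (N f(\<rho>))\<close> for every \<open>f \<in> F\<close> and
all \<open>\<rho>\<close>, \<open>N\<close>, which is all that refinement asks for; the converse is immediate.  Partial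
correctness is the same argument with \<open>I - N\<close> in place of \<open>N\<close>.  Positivity of \<open>\<sigma>\<close> comes from
writing \<open>N\<close> as a sum of rank-one operators.\<close>

lemma basis_eq_image_Pow: "basis V = (\<lambda>S q. q \<in> S) ` Pow V"
proof
  show "basis V \<subseteq> (\<lambda>S q. q \<in> S) ` Pow V"
  proof
    fix s assume "s \<in> basis V"
    hence "{q. s q} \<in> Pow V" by (auto simp: basis_def)
    moreover have "s = (\<lambda>q. q \<in> {q. s q})" by auto
    ultimately show "s \<in> (\<lambda>S q. q \<in> S) ` Pow V" by blast
  qed
  show "(\<lambda>S q. q \<in> S) ` Pow V \<subseteq> basis V" by (auto simp: basis_def)
qed

lemma finite_basis [simp]: "finite V \<Longrightarrow> finite (basis V)"
  by (simp add: basis_eq_image_Pow)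

lemma card_basis: "finite V \<Longrightarrow> card (basis V) = 2 ^ card V"
proof -
  assume "finite V"
  moreover have "inj_on (\<lambda>S q. q \<in> S) (Pow V)"
    by (rule inj_onI) (metis Collect_mem_eq)
  ultimately show ?thesis by (simp add: basis_eq_image_Pow card_image card_Pow)
qed

lemma restr_in_basis [simp]: "restr V s \<in> basis V"
  by (simp add: restr_def basis_def)

lemma restr_basis_id [simp]: "s \<in> basis V \<Longrightarrow> restr V s = s"
  by (auto simp: restr_def basis_def)

lemma merge_in_basis_Un: "i \<in> basis V \<Longrightarrow> a \<in> basis Y \<Longrightarrow> merge V i a \<in> basis (V \<union> Y)"
  by (auto simp: merge_def basis_def)

lemma merge_in_basis: "V \<subseteq> X \<Longrightarrow> i \<in> basis V \<Longrightarrow> a \<in> basis X \<Longrightarrow> merge V i a \<in> basis X"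
  by (auto simp: merge_def basis_def)

lemma merge_in_basis_Diff: "V \<subseteq> X \<Longrightarrow> i \<in> basis V \<Longrightarrow> a \<in> basis (X - V) \<Longrightarrow> merge V i a \<in> basis X"
  by (auto simp: merge_def basis_def)

lemma restr_merge_basis [simp]: "i \<in> basis V \<Longrightarrow> restr V (merge V i a) = i"
  by (auto simp: restr_def merge_def basis_def)

lemma restr_merge_disjoint: "V \<inter> Y = {} \<Longrightarrow> restr Y (merge V i a) = restr Y a"
  by (auto simp: restr_def merge_def)

lemma restr_merge_subset: "V \<subseteq> W \<Longrightarrow> restr W (merge V k t) = merge V k (restr W t)"
  by (auto simp: restr_def merge_def)

lemma restr_restr_subset: "V \<subseteq> W \<Longrightarrow> restr V (restr W s) = restr V s"
  by (auto simp: restr_def)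

lemma merge_restr_Diff: "s \<in> basis X \<Longrightarrow> merge V (restr V s) (restr (X - V) s) = s"
  by (auto simp: restr_def merge_def basis_def)

lemma merge_restr_self [simp]: "merge V (restr V s) s = s"
  by (auto simp: restr_def merge_def)

lemma merge_merge [simp]: "merge V i (merge V j a) = merge V i a"
  by (auto simp: merge_def)

lemma sum_basis_split:
  assumes "finite X" "V \<subseteq> X"
  shows "(\<Sum>s\<in>basis X. f s) = (\<Sum>i\<in>basis V. \<Sum>a\<in>basis (X - V). f (merge V i a))"
proof -
  have "bij_betw (\<lambda>(i, a). merge V i a) (basis V \<times> basis (X - V)) (basis X)"
    by (rule bij_betw_byWitness[where f' = "\<lambda>s. (restr V s, restr (X - V) s)"])
       (use assms in \<open>auto simp: restr_merge_disjoint merge_restr_Diff intro: merge_in_basis_Diff\<close>)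
  then have "(\<Sum>s\<in>basis X. f s) = (\<Sum>(i, a)\<in>basis V \<times> basis (X - V). f (merge V i a))"
    by (simp add: sum.reindex_bij_betw[symmetric] case_prod_beta')
  also have "\<dots> = (\<Sum>i\<in>basis V. \<Sum>a\<in>basis (X - V). f (merge V i a))"
    by (simp add: sum.cartesian_product)
  finally show ?thesis .
qed

lemma sum_basis_merge_swap:
  assumes "V \<subseteq> X"
  shows "(\<Sum>s\<in>basis X. \<Sum>i\<in>basis V. g s i) = (\<Sum>s\<in>basis X. \<Sum>i\<in>basis V. g (merge V i s) (restr V s))"
proof -
  have "(\<Sum>s\<in>basis X. \<Sum>i\<in>basis V. g s i) = (\<Sum>(s, i)\<in>basis X \<times> basis V. g s i)"
    by (simp add: sum.cartesian_product)
  also have "\<dots> = (\<Sum>(s, i)\<in>basis X \<times> basis V. g (merge V i s) (restr V s))"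
    by (rule sum.reindex_bij_witness[where i = "\<lambda>(s, i). (merge V i s, restr V s)"
        and j = "\<lambda>(s, i). (merge V i s, restr V s)"])
       (use assms in \<open>auto intro: merge_in_basis\<close>)
  also have "\<dots> = (\<Sum>s\<in>basis X. \<Sum>i\<in>basis V. g (merge V i s) (restr V s))"
    by (simp add: sum.cartesian_product)
  finally show ?thesis .
qed

section \<open>Positive semidefinite kernels on a finite index set\<close>

definition quad_form :: "'a set \<Rightarrow> ('a \<Rightarrow> 'a \<Rightarrow> complex) \<Rightarrow> ('a \<Rightarrow> complex) \<Rightarrow> complex" where
  "quad_form B A \<psi> = (\<Sum>s\<in>B. \<Sum>t\<in>B. cnj (\<psi> s) * A s t * \<psi> t)"

definition psd_kernel :: "'a set \<Rightarrow> ('a \<Rightarrow> 'a \<Rightarrow> complex) \<Rightarrow> bool" where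
  "psd_kernel B A \<longleftrightarrow> (\<forall>\<psi>. Im (quad_form B A \<psi>) = 0 \<and> 0 \<le> Re (quad_form B A \<psi>))"

lemma quad_form_support:
  assumes "finite B" "S \<subseteq> B" "\<forall>x\<in>B - S. \<psi> x = 0"
  shows "quad_form B A \<psi> = quad_form S A \<psi>"
proof -
  have "quad_form B A \<psi> = (\<Sum>s\<in>S. \<Sum>t\<in>B. cnj (\<psi> s) * A s t * \<psi> t)"
    unfolding quad_form_def using assms by (intro sum.mono_neutral_right) auto
  also have "\<dots> = quad_form S A \<psi>"
    unfolding quad_form_def using assms by (intro sum.cong refl sum.mono_neutral_right) auto
  finally show ?thesis .
qed

lemma psd_kernel_subset: "finite B \<Longrightarrow> S \<subseteq> B \<Longrightarrow> psd_kernel B A \<Longrightarrow> psd_kernel S A"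
  unfolding psd_kernel_def
proof (intro allI)
  fix \<psi> assume a: "finite B" "S \<subseteq> B" "\<forall>\<psi>. Im (quad_form B A \<psi>) = 0 \<and> 0 \<le> Re (quad_form B A \<psi>)"
  let ?\<phi> = "\<lambda>x. if x \<in> S then \<psi> x else (0::complex)"
  have "quad_form B A ?\<phi> = quad_form S A ?\<phi>" using a by (intro quad_form_support) auto
  also have "\<dots> = quad_form S A \<psi>" unfolding quad_form_def by (intro sum.cong refl) auto
  finally show "Im (quad_form S A \<psi>) = 0 \<and> 0 \<le> Re (quad_form S A \<psi>)" using a(3) by metis
qed

lemma quad_form_doubleton:
  assumes "s \<noteq> t"
  shows "quad_form {s, t} A \<psi> = cnj (\<psi> s) * A s s * \<psi> s + cnj (\<psi> s) * A s t * \<psi> t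
     + cnj (\<psi> t) * A t s * \<psi> s + cnj (\<psi> t) * A t t * \<psi> t"
  using assms by (simp add: quad_form_def)

lemma quad_form_singleton: "quad_form {s} A \<psi> = cnj (\<psi> s) * A s s * \<psi> s"
  by (simp add: quad_form_def)

lemma psd_kernel_diag:
  assumes "finite B" "psd_kernel B A" "s \<in> B"
  shows "Im (A s s) = 0" "0 \<le> Re (A s s)"
proof -
  let ?\<psi> = "\<lambda>x. if x = s then 1 else (0::complex)"
  have "quad_form B A ?\<psi> = quad_form {s} A ?\<psi>" using assms by (intro quad_form_support) auto
  also have "\<dots> = A s s" by (simp add: quad_form_singleton)
  finally show "Im (A s s) = 0" "0 \<le> Re (A s s)" using assms(2) unfolding psd_kernel_def by metis+
qed

lemma psd_kernel_hermitian:
  assumes "finite B" "psd_kernel B A" "s \<in> B" "t \<in> B"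
  shows "A t s = cnj (A s t)"
proof (cases "s = t")
  case True
  then show ?thesis using psd_kernel_diag[OF assms(1,2,3)] by (simp add: complex_eq_iff)
next
  case False
  have d1: "Im (A s s) = 0" "Im (A t t) = 0" using psd_kernel_diag(1)[OF assms(1,2,3)] psd_kernel_diag(1)[OF assms(1,2,4)] by auto
  let ?\<psi>1 = "\<lambda>x. if x = s then 1 else if x = t then 1 else (0::complex)"
  let ?\<psi>2 = "\<lambda>x. if x = s then 1 else if x = t then \<i> else (0::complex)"
  have "quad_form B A ?\<psi>1 = quad_form {s,t} A ?\<psi>1" using assms by (intro quad_form_support) auto
  also have "\<dots> = A s s + A s t + A t s + A t t" using False by (simp add: quad_form_doubleton)
  finally have "Im (A s s + A s t + A t s + A t t) = 0" using assms(2) unfolding psd_kernel_def by metis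
  hence e1: "Im (A s t + A t s) = 0" using d1 by simp
  have "quad_form B A ?\<psi>2 = quad_form {s,t} A ?\<psi>2" using assms by (intro quad_form_support) auto
  also have "\<dots> = A s s + A s t * \<i> - \<i> * A t s + A t t" using False by (simp add: quad_form_doubleton complex_eq_iff)
  finally have "Im (A s s + A s t * \<i> - \<i> * A t s + A t t) = 0" using assms(2) unfolding psd_kernel_def by metis
  hence e2: "Re (A s t) - Re (A t s) = 0" using d1 by simp
  show ?thesis using e1 e2 by (simp add: complex_eq_iff)
qed

lemma psd_kernel_zero_diag_row:
  assumes "finite B" "psd_kernel B A" "s \<in> B" "t \<in> B" "A s s = 0"
  shows "A s t = 0"
proof (rule ccontr)
  assume nz: "A s t \<noteq> 0"
  hence st: "s \<noteq> t" using assms by auto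
  have h: "A t s = cnj (A s t)" using psd_kernel_hermitian[OF assms(1-4)] by auto
  have dt: "Im (A t t) = 0" "0 \<le> Re (A t t)" using psd_kernel_diag[OF assms(1,2,4)] by auto
  define lam where "lam = (Re (A t t) + 1) / (cmod (A s t))\<^sup>2"
  define x where "x = - complex_of_real lam * A s t"
  let ?\<psi> = "\<lambda>y. if y = s then x else if y = t then 1 else (0::complex)"
  have "quad_form B A ?\<psi> = quad_form {s,t} A ?\<psi>" using assms by (intro quad_form_support) auto
  also have "\<dots> = cnj x * A s t + x * A t s + A t t" using st assms(5) by (simp add: quad_form_doubleton)
  finally have g: "quad_form B A ?\<psi> = cnj x * A s t + x * cnj (A s t) + A t t" using h by simp
  have "cnj x * A s t = - complex_of_real (lam * (cmod (A s t))\<^sup>2)"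
  proof -
    have "cnj x * A s t = - of_real lam * (A s t * cnj (A s t))" unfolding x_def by (simp add: mult.commute)
    also have "A s t * cnj (A s t) = of_real ((cmod (A s t))\<^sup>2)" by (rule complex_norm_square[symmetric])
    finally show ?thesis by simp
  qed
  moreover have "lam * (cmod (A s t))\<^sup>2 = Re (A t t) + 1" unfolding lam_def using nz by simp
  ultimately have "Re (quad_form B A ?\<psi>) = - 2 * (Re (A t t) + 1) + Re (A t t)"
    unfolding g by (simp add: complex_eq_iff)
  moreover have "0 \<le> Re (quad_form B A ?\<psi>)" using assms(2) unfolding psd_kernel_def by blast
  ultimately have "0 \<le> - 2 * (Re (A t t) + 1) + Re (A t t)" by simp
  thus False using dt by (simp add: algebra_simps)
qed

lemma sum_times_delta: "finite B \<Longrightarrow> s0 \<in> B \<Longrightarrow> (\<Sum>t\<in>B. f t * (if t = s0 then c else 0)) = f s0 * (c::complex)"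
  by (simp add: if_distrib[of "\<lambda>z. f _ * z"] sum.delta cong: if_cong)

lemma sum_delta_times: "finite B \<Longrightarrow> s0 \<in> B \<Longrightarrow> (\<Sum>t\<in>B. (if t = s0 then c else 0) * f t) = (c::complex) * f s0"
  using sum_times_delta[of B s0 f c] by (simp add: mult.commute)

lemma quad_form_shift:
  assumes "finite B" "s0 \<in> B"
  shows "quad_form B A (\<lambda>x. \<psi> x + (if x = s0 then c else 0)) = quad_form B A \<psi>
     + c * (\<Sum>s\<in>B. cnj (\<psi> s) * A s s0) + cnj c * (\<Sum>t\<in>B. A s0 t * \<psi> t) + cnj c * A s0 s0 * c"
proof -
  define d where "d = (\<lambda>x. if x = s0 then c else (0::complex))"
  have e: "cnj (\<psi> s + d s) * A s t * (\<psi> t + d t) = cnj (\<psi> s) * A s t * \<psi> t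
     + (cnj (\<psi> s) * A s t) * d t + cnj (d s) * (A s t * \<psi> t) + cnj (d s) * (A s t * d t)" for s t
    by (simp add: algebra_simps)
  have cd: "cnj (d s) = (if s = s0 then cnj c else 0)" for s by (simp add: d_def)
  have "quad_form B A (\<lambda>x. \<psi> x + d x) = quad_form B A \<psi> + (\<Sum>s\<in>B. \<Sum>t\<in>B. (cnj (\<psi> s) * A s t) * d t)
     + (\<Sum>s\<in>B. \<Sum>t\<in>B. cnj (d s) * (A s t * \<psi> t)) + (\<Sum>s\<in>B. \<Sum>t\<in>B. cnj (d s) * (A s t * d t))"
    unfolding quad_form_def e by (simp add: sum.distrib)
  also have "(\<Sum>s\<in>B. \<Sum>t\<in>B. (cnj (\<psi> s) * A s t) * d t) = c * (\<Sum>s\<in>B. cnj (\<psi> s) * A s s0)"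
    unfolding d_def using assms by (simp add: sum_times_delta sum_distrib_left mult.commute[of c])
  also have "(\<Sum>s\<in>B. \<Sum>t\<in>B. cnj (d s) * (A s t * \<psi> t)) = cnj c * (\<Sum>t\<in>B. A s0 t * \<psi> t)"
    unfolding cd using assms by (simp add: sum_delta_times sum_distrib_left[symmetric])
  also have "(\<Sum>s\<in>B. \<Sum>t\<in>B. cnj (d s) * (A s t * d t)) = cnj c * A s0 s0 * c"
  proof -
    have "(\<Sum>t\<in>B. cnj (d s) * (A s t * d t)) = cnj (d s) * (A s s0 * c)" for s
      unfolding sum_distrib_left[symmetric] d_def using sum_times_delta[OF assms, of "A s" c] by simp
    hence "(\<Sum>s\<in>B. \<Sum>t\<in>B. cnj (d s) * (A s t * d t)) = (\<Sum>s\<in>B. cnj (d s) * (A s s0 * c))" by simp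
    also have "\<dots> = cnj c * (A s0 s0 * c)" unfolding cd using sum_delta_times[OF assms] by simp
    finally show ?thesis by (simp add: mult.assoc)
  qed
  finally show ?thesis unfolding d_def .
qed

lemma quad_form_diff: "quad_form B (\<lambda>x y. A x y - C x y) \<psi> = quad_form B A \<psi> - quad_form B C \<psi>"
  unfolding quad_form_def by (simp add: algebra_simps sum_subtractf)

lemma quad_form_rank_one: "quad_form B (\<lambda>x y. m x * cnj (m y)) \<psi> = cnj (\<Sum>t\<in>B. cnj (m t) * \<psi> t) * (\<Sum>t\<in>B. cnj (m t) * \<psi> t)"
proof -
  have "quad_form B (\<lambda>x y. m x * cnj (m y)) \<psi> = (\<Sum>s\<in>B. cnj (\<psi> s) * m s) * (\<Sum>t\<in>B. cnj (m t) * \<psi> t)"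
    unfolding quad_form_def sum_product by (intro sum.cong refl) (simp add: mult.assoc)
  also have "(\<Sum>s\<in>B. cnj (\<psi> s) * m s) = cnj (\<Sum>t\<in>B. cnj (m t) * \<psi> t)"
    by (simp add: mult.commute)
  finally show ?thesis .
qed

lemma cnj_mult_self: "Im (cnj z * z) = 0 \<and> 0 \<le> Re (cnj z * z)"
  by (simp add: algebra_simps)

lemma psd_kernel_rank_one: "psd_kernel B (\<lambda>x y. m x * cnj (m y))"
  unfolding psd_kernel_def quad_form_rank_one by (rule allI) (rule cnj_mult_self)

lemma psd_kernel_schur_complement:
  assumes fin: "finite B" and ps: "psd_kernel B A" and s0: "s0 \<in> B" and a: "A s0 s0 = complex_of_real a" "a > 0"
  defines "m0 \<equiv> \<lambda>x. A x s0 / complex_of_real (sqrt a)"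
  shows "psd_kernel B (\<lambda>x y. A x y - m0 x * cnj (m0 y))"
  unfolding psd_kernel_def
proof
  fix \<psi>
  define x where "x = (\<Sum>t\<in>B. A s0 t * \<psi> t)"
  define c where "c = - x / complex_of_real a"
  have herm: "A s s0 = cnj (A s0 s)" if "s \<in> B" for s using psd_kernel_hermitian[OF fin ps s0 that] .
  have sq: "complex_of_real (sqrt a) * complex_of_real (sqrt a) = complex_of_real a"
    using a(2) by (simp flip: of_real_mult)
  have y: "(\<Sum>t\<in>B. cnj (m0 t) * \<psi> t) = x / complex_of_real (sqrt a)"
    unfolding x_def m0_def sum_divide_distrib
    by (intro sum.cong refl) (simp add: herm)
  have r1: "quad_form B (\<lambda>x y. m0 x * cnj (m0 y)) \<psi> = cnj x * x / complex_of_real a"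
    unfolding quad_form_rank_one y using sq by (simp add: field_simps)
  have cx: "(\<Sum>s\<in>B. cnj (\<psi> s) * A s s0) = cnj x"
    unfolding x_def by (simp add: herm mult.commute)
  \<comment> \<open>Completing the square: the Schur complement's form at \<open>\<psi>\<close> is that of \<open>A\<close> at
    \<open>\<psi>\<close> shifted along \<open>s0\<close>.\<close>
  have "quad_form B A (\<lambda>z. \<psi> z + (if z = s0 then c else 0)) = quad_form B A \<psi> + c * cnj x + cnj c * x + cnj c * complex_of_real a * c"
    using quad_form_shift[OF fin s0, of A \<psi> c] cx a(1) x_def by simp
  also have "\<dots> = quad_form B A \<psi> - cnj x * x / complex_of_real a"
    unfolding c_def using a(2) by (simp add: field_simps)
  also have "\<dots> = quad_form B (\<lambda>x y. A x y - m0 x * cnj (m0 y)) \<psi>"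
    by (simp add: quad_form_diff r1)
  finally have "quad_form B (\<lambda>x y. A x y - m0 x * cnj (m0 y)) \<psi> = quad_form B A (\<lambda>z. \<psi> z + (if z = s0 then c else 0))" by simp
  thus "Im (quad_form B (\<lambda>x y. A x y - m0 x * cnj (m0 y)) \<psi>) = 0 \<and> 0 \<le> Re (quad_form B (\<lambda>x y. A x y - m0 x * cnj (m0 y)) \<psi>)"
    using ps unfolding psd_kernel_def by metis
qed

lemma gram_extend_zero:
  assumes gram: "\<forall>s\<in>B. \<forall>t\<in>B. A s t = (\<Sum>r<n. f r s * cnj (f r t))"
    and zero: "\<forall>t\<in>insert s0 B. A s0 t = 0 \<and> A t s0 = 0"
  shows "\<exists>f'. \<forall>s\<in>insert s0 B. \<forall>t\<in>insert s0 B. A s t = (\<Sum>r<n. f' r s * cnj (f' r t))"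
proof -
  define f' where "f' r x = (if x = s0 then 0 else f r x)" for r x
  have "A s t = (\<Sum>r<n. f' r s * cnj (f' r t))" if "s \<in> insert s0 B" "t \<in> insert s0 B" for s t
    using gram zero that by (cases "s = s0 \<or> t = s0") (auto simp: f'_def)
  then show ?thesis by blast
qed

lemma psd_kernel_gram_factor:
  assumes "finite B" "psd_kernel B A"
  shows "\<exists>(n::nat) f. \<forall>s\<in>B. \<forall>t\<in>B. A s t = (\<Sum>r<n. f r s * cnj (f r t))"
  using assms
proof (induction B arbitrary: A rule: finite_induct)
  case empty
  then show ?case by auto
next
  case (insert s0 B)
  have fin: "finite (insert s0 B)" using insert by simp
  have s0: "s0 \<in> insert s0 B" by simp
  have zero_row: "\<forall>t\<in>insert s0 B. A' s0 t = 0 \<and> A' t s0 = 0"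
    if "psd_kernel (insert s0 B) A'" "A' s0 s0 = 0" for A'
    using psd_kernel_zero_diag_row[OF fin that(1) s0 _ that(2)] psd_kernel_hermitian[OF fin that(1) s0]
    by simp
  have IH: "\<exists>(n::nat) f. \<forall>s\<in>B. \<forall>t\<in>B. A' s t = (\<Sum>r<n. f r s * cnj (f r t))"
    if "psd_kernel (insert s0 B) A'" for A'
    using insert.IH psd_kernel_subset[OF fin _ that] by blast
  show ?case
  proof (cases "A s0 s0 = 0")
    case True
    obtain n :: nat and f where "\<forall>s\<in>B. \<forall>t\<in>B. A s t = (\<Sum>r<n. f r s * cnj (f r t))"
      using IH[OF insert.prems] by blast
    from gram_extend_zero[OF this zero_row[OF insert.prems True]] show ?thesis by blast
  next
    case False
    define a where "a = Re (A s0 s0)"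
    have "Im (A s0 s0) = 0" "0 \<le> a" using psd_kernel_diag[OF fin insert.prems s0] by (auto simp: a_def)
    then have aeq: "A s0 s0 = complex_of_real a" and apos: "a > 0"
      using False by (auto simp: a_def complex_eq_iff)
    define m0 where "m0 = (\<lambda>x. A x s0 / complex_of_real (sqrt a))"
    define A' where "A' = (\<lambda>x y. A x y - m0 x * cnj (m0 y))"
    have psd': "psd_kernel (insert s0 B) A'"
      unfolding A'_def m0_def using psd_kernel_schur_complement[OF fin insert.prems s0 aeq apos] .
    have "complex_of_real (sqrt a) * complex_of_real (sqrt a) = complex_of_real a"
      using apos by (simp flip: of_real_mult)
    then have "A' s0 s0 = 0"
      unfolding A'_def m0_def aeq using apos by (simp add: field_simps)
    moreover obtain n :: nat and f0 where "\<forall>s\<in>B. \<forall>t\<in>B. A' s t = (\<Sum>r<n. f0 r s * cnj (f0 r t))"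
      using IH[OF psd'] by blast
    ultimately obtain f
      where f: "\<forall>s\<in>insert s0 B. \<forall>t\<in>insert s0 B. A' s t = (\<Sum>r<n. f r s * cnj (f r t))"
      using gram_extend_zero[OF _ zero_row[OF psd' \<open>A' s0 s0 = 0\<close>]] by blast
    define g where "g = (\<lambda>r. if r < n then f r else m0)"
    have "\<forall>s\<in>insert s0 B. \<forall>t\<in>insert s0 B. A s t = (\<Sum>r<Suc n. g r s * cnj (g r t))"
      using f by (simp add: g_def A'_def algebra_simps)
    then show ?thesis by blast
  qed
qed

lemma qform_eq_quad_form: "qform X A \<psi> = quad_form (basis X) A \<psi>"
  by (simp add: qform_def quad_form_def)

lemma psd_iff_psd_kernel: "psd X A \<longleftrightarrow> op_on X A \<and> psd_kernel (basis X) A"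
  by (simp add: psd_def psd_kernel_def qform_eq_quad_form)

lemma psd_gram_factor:
  assumes "finite X" "psd X A"
  shows "\<exists>(n::nat) f. \<forall>s\<in>basis X. \<forall>t\<in>basis X. A s t = (\<Sum>r<n. f r s * cnj (f r t))"
  using psd_kernel_gram_factor[of "basis X" A] assms by (simp add: psd_iff_psd_kernel)

lemma trace_mult_expand: "trace X (mult X A B) = (\<Sum>s\<in>basis X. \<Sum>u\<in>basis X. A s u * B u s)"
  by (simp add: trace_def mult_def)

lemma trace_mult_comm: "trace X (mult X A B) = trace X (mult X B A)"
  unfolding trace_mult_expand by (subst sum.swap) (simp add: mult.commute)

lemma trace_mult_div: "trace Y (mult Y A (\<lambda>s t. B s t / z)) = trace Y (mult Y A B) / z"
  unfolding trace_mult_expand by (simp add: sum_divide_distrib)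

lemma psd_trace_nonneg: assumes "finite X" "psd X A" shows "Im (trace X A) = 0" "0 \<le> Re (trace X A)"
proof -
  have d: "Im (A s s) = 0 \<and> 0 \<le> Re (A s s)" if "s \<in> basis X" for s
    using psd_kernel_diag[of "basis X" A s] assms that by (simp add: psd_iff_psd_kernel)
  show "Im (trace X A) = 0" unfolding trace_def Im_sum using d by simp
  show "0 \<le> Re (trace X A)" unfolding trace_def Re_sum using d by (simp add: sum_nonneg)
qed

lemma trace_mult_psd:
  assumes fin: "finite X" and A: "psd X A" and B: "psd X B"
  shows "Im (trace X (mult X A B)) = 0" "0 \<le> Re (trace X (mult X A B))"
proof -
  obtain n :: nat and f where f: "\<forall>s\<in>basis X. \<forall>t\<in>basis X. A s t = (\<Sum>r<n. f r s * cnj (f r t))"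
    using psd_gram_factor[OF fin A] by blast
  have "trace X (mult X A B) = (\<Sum>s\<in>basis X. \<Sum>u\<in>basis X. \<Sum>r<n. f r s * cnj (f r u) * B u s)"
    unfolding trace_mult_expand using f by (simp add: sum_distrib_right)
  also have "\<dots> = (\<Sum>s\<in>basis X. \<Sum>r<n. \<Sum>u\<in>basis X. f r s * cnj (f r u) * B u s)"
    by (rule sum.cong[OF refl], rule sum.swap)
  also have "\<dots> = (\<Sum>r<n. \<Sum>s\<in>basis X. \<Sum>u\<in>basis X. f r s * cnj (f r u) * B u s)"
    by (rule sum.swap)
  also have "\<dots> = (\<Sum>r<n. \<Sum>u\<in>basis X. \<Sum>s\<in>basis X. f r s * cnj (f r u) * B u s)"
    by (rule sum.cong[OF refl], rule sum.swap)
  also have "\<dots> = (\<Sum>r<n. \<Sum>u\<in>basis X. \<Sum>s\<in>basis X. cnj (f r u) * B u s * f r s)"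
    by (simp add: mult.commute mult.left_commute)
  also have "\<dots> = (\<Sum>r<n. qform X B (f r))" by (simp add: qform_def)
  finally have e: "trace X (mult X A B) = (\<Sum>r<n. qform X B (f r))" .
  have q: "Im (qform X B \<psi>) = 0 \<and> 0 \<le> Re (qform X B \<psi>)" for \<psi> using B by (simp add: psd_def)
  show "Im (trace X (mult X A B)) = 0" unfolding e Im_sum using q by simp
  show "0 \<le> Re (trace X (mult X A B))" unfolding e Re_sum using q by (simp add: sum_nonneg)
qed

lemma op_on_scale: "op_on V A \<Longrightarrow> op_on V (\<lambda>s t. c * A s t)"
  by (simp add: op_on_def)

lemma op_on_sum: "(\<And>k. k \<in> K \<Longrightarrow> op_on V (B k)) \<Longrightarrow> op_on V (\<lambda>s t. \<Sum>k\<in>K. c k * B k s t)"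
  by (simp add: op_on_def)

lemma op_on_ebasis [simp]: "op_on V (ebasis V i j)"
  by (auto simp: op_on_def ebasis_def)

lemma op_on_zero [simp]: "op_on V (\<lambda>s t. 0)"
  by (simp add: op_on_def)

lemma op_on_ext [simp]: "op_on X (ext W X A)"
  by (simp add: op_on_def ext_def)

lemma op_on_ident [simp]: "op_on X (ident X)"
  by (simp add: op_on_def ident_def)

lemma op_on_minus: "op_on X A \<Longrightarrow> op_on X B \<Longrightarrow> op_on X (minus_op A B)"
  by (simp add: op_on_def minus_op_def)

definition ketbra :: "qvar set \<Rightarrow> (bst \<Rightarrow> complex) \<Rightarrow> qop" where
  "ketbra X \<psi> = (\<lambda>u v. if u \<in> basis X \<and> v \<in> basis X then \<psi> u * cnj (\<psi> v) else 0)"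

lemma op_on_ketbra [simp]: "op_on X (ketbra X \<psi>)"
  by (simp add: op_on_def ketbra_def)

lemma qform_eq_trace_ketbra: "qform X A \<psi> = trace X (mult X A (ketbra X \<psi>))"
  unfolding qform_def trace_mult_expand ketbra_def
  by (intro sum.cong refl) (simp add: mult.commute mult.left_commute)

lemma quad_form_cong: "(\<And>s t. s \<in> B \<Longrightarrow> t \<in> B \<Longrightarrow> A s t = A' s t) \<Longrightarrow> quad_form B A \<psi> = quad_form B A' \<psi>"
  unfolding quad_form_def by (intro sum.cong refl) simp

lemma psd_ketbra: "psd X (ketbra X \<psi>)"
proof -
  have "Im (qform X (ketbra X \<psi>) \<phi>) = 0 \<and> 0 \<le> Re (qform X (ketbra X \<psi>) \<phi>)" for \<phi>
  proof -
    define z where "z = (\<Sum>t\<in>basis X. cnj (\<psi> t) * \<phi> t)"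
    have "qform X (ketbra X \<psi>) \<phi> = quad_form (basis X) (\<lambda>x y. \<psi> x * cnj (\<psi> y)) \<phi>"
      unfolding qform_eq_quad_form by (rule quad_form_cong) (simp add: ketbra_def)
    also have "\<dots> = cnj z * z" unfolding quad_form_rank_one z_def ..
    finally show ?thesis using cnj_mult_self[of z] by (simp only:)
  qed
  thus ?thesis by (simp add: psd_def)
qed

lemma trace_ketbra: assumes "finite X" shows "trace X (ketbra X \<psi>) = qform X (ident X) \<psi>"
proof -
  have "qform X (ident X) \<psi> = (\<Sum>s\<in>basis X. \<Sum>t\<in>basis X. if t = s then cnj (\<psi> s) * \<psi> s else 0)"
    unfolding qform_def ident_def by (intro sum.cong refl) auto
  also have "\<dots> = (\<Sum>s\<in>basis X. cnj (\<psi> s) * \<psi> s)"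
    using assms by (intro sum.cong refl) simp
  also have "\<dots> = trace X (ketbra X \<psi>)" unfolding trace_def ketbra_def by (simp add: mult.commute)
  finally show ?thesis by simp
qed

lemma merge_agree_outside_iff: "finite X \<Longrightarrow> W \<subseteq> X \<Longrightarrow> c \<in> basis (X - W) \<Longrightarrow> c' \<in> basis (X - W) \<Longrightarrow>
    (\<forall>q\<in>X - W. merge W u c q = merge W v c' q) \<longleftrightarrow> c = c'"
  by (auto simp: merge_def basis_def fun_eq_iff)

lemma ext_merge:
  assumes "finite X" "W \<subseteq> X" "u \<in> basis W" "v \<in> basis W" "c \<in> basis (X - W)" "c' \<in> basis (X - W)"
  shows "ext W X A (merge W u c) (merge W v c') = (if c = c' then A u v else 0)"
  using assms merge_agree_outside_iff[OF assms(1,2,5,6), of u v] merge_in_basis_Diff[OF assms(2,3,5)] merge_in_basis_Diff[OF assms(2,4,6)]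
  by (simp add: ext_def)

lemma qform_ext:
  assumes X: "finite X" and WX: "W \<subseteq> X"
  shows "qform X (ext W X A) \<psi> = (\<Sum>c\<in>basis (X - W). qform W A (\<lambda>u. \<psi> (merge W u c)))"
proof -
  have fin: "finite (basis (X - W))" "finite (basis W)" using X finite_subset[OF WX X] by auto
  have "qform X (ext W X A) \<psi> = (\<Sum>u\<in>basis W. \<Sum>c\<in>basis (X - W). \<Sum>v\<in>basis W. \<Sum>c'\<in>basis (X - W).
      cnj (\<psi> (merge W u c)) * ext W X A (merge W u c) (merge W v c') * \<psi> (merge W v c'))"
    unfolding qform_def sum_basis_split[OF X WX] ..
  also have "\<dots> = (\<Sum>u\<in>basis W. \<Sum>c\<in>basis (X - W). \<Sum>v\<in>basis W.
      cnj (\<psi> (merge W u c)) * A u v * \<psi> (merge W v c))"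
  proof (intro sum.cong refl)
    fix u c v assume uc: "u \<in> basis W" "c \<in> basis (X - W)" "v \<in> basis W"
    have "(\<Sum>c'\<in>basis (X - W). cnj (\<psi> (merge W u c)) * ext W X A (merge W u c) (merge W v c') * \<psi> (merge W v c'))
        = (\<Sum>c'\<in>basis (X - W). if c = c' then cnj (\<psi> (merge W u c)) * A u v * \<psi> (merge W v c) else 0)"
      using uc by (intro sum.cong refl) (simp add: ext_merge[OF X WX])
    also have "\<dots> = cnj (\<psi> (merge W u c)) * A u v * \<psi> (merge W v c)" using fin uc by simp
    finally show "(\<Sum>c'\<in>basis (X - W). cnj (\<psi> (merge W u c)) * ext W X A (merge W u c) (merge W v c') * \<psi> (merge W v c'))
        = cnj (\<psi> (merge W u c)) * A u v * \<psi> (merge W v c)" .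
  qed
  also have "\<dots> = (\<Sum>c\<in>basis (X - W). \<Sum>u\<in>basis W. \<Sum>v\<in>basis W.
      cnj (\<psi> (merge W u c)) * A u v * \<psi> (merge W v c))" by (rule sum.swap)
  also have "\<dots> = (\<Sum>c\<in>basis (X - W). qform W A (\<lambda>u. \<psi> (merge W u c)))" by (simp add: qform_def)
  finally show ?thesis .
qed

lemma psd_ext:
  assumes X: "finite X" and WX: "W \<subseteq> X" and A: "psd W A"
  shows "psd X (ext W X A)"
proof -
  have q: "Im (qform W A \<phi>) = 0 \<and> 0 \<le> Re (qform W A \<phi>)" for \<phi> using A by (simp add: psd_def)
  show ?thesis unfolding psd_def qform_ext[OF X WX] Im_sum Re_sum using q by (simp add: sum_nonneg)
qed

lemma ext_ident: "V \<subseteq> X \<Longrightarrow> ext V X (ident V) = ident X"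
  by (auto simp: ext_def ident_def fun_eq_iff restr_def basis_def)

lemma ext_same: "op_on W A \<Longrightarrow> ext W W A = A"
  by (auto simp: ext_def fun_eq_iff op_on_def)

lemma mult_ident: assumes "finite X" shows "mult X (ident X) A s t = (if s \<in> basis X then A s t else 0)"
proof -
  have "mult X (ident X) A s t = (\<Sum>u\<in>basis X. if u = s then (if s \<in> basis X then A s t else 0) else 0)"
    unfolding mult_def ident_def by (intro sum.cong refl) auto
  also have "\<dots> = (if s \<in> basis X then A s t else 0)" using assms by simp
  finally show ?thesis .
qed

lemma trace_mult_ident: assumes "finite X" shows "trace X (mult X (ident X) A) = trace X A"
  unfolding trace_def mult_ident[OF assms] by simp

lemma ext_minus: "ext W X (minus_op A B) = minus_op (ext W X A) (ext W X B)"
  by (simp add: ext_def minus_op_def fun_eq_iff)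

lemma trace_mult_minus: "trace X (mult X (minus_op A B) C) = trace X (mult X A C) - trace X (mult X B C)"
  unfolding trace_mult_expand minus_op_def by (simp add: algebra_simps sum_subtractf)

lemma qform_minus: "qform X (minus_op A B) \<psi> = qform X A \<psi> - qform X B \<psi>"
  unfolding qform_def minus_op_def by (simp add: algebra_simps sum_subtractf)

lemma trace_ext_compl:
  assumes X: "finite X" and WX: "W \<subseteq> X" and \<rho>: "op_on X \<rho>"
  shows "trace X (mult X (ext W X (minus_op (ident W) A)) \<rho>) = trace X \<rho> - trace X (mult X (ext W X A) \<rho>)"
  unfolding ext_minus trace_mult_minus ext_ident[OF WX] trace_mult_ident[OF X] ..

lemma trace_ext_ident:
  assumes X: "finite X" and WX: "W \<subseteq> X"
  shows "trace X (mult X (ext W X (ident W)) \<rho>) = trace X \<rho>"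
  unfolding ext_ident[OF WX] trace_mult_ident[OF X] ..

lemma minus_op_ident_ident: "minus_op (ident X) (minus_op (ident X) M) = M"
  by (simp add: minus_op_def fun_eq_iff)

lemma effect_compl: "effect X M \<Longrightarrow> effect X (minus_op (ident X) M)"
  by (simp add: effect_def minus_op_ident_ident)

lemma effect_ext:
  assumes X: "finite X" and WX: "W \<subseteq> X" and M: "effect W M"
  shows "effect X (ext W X M)"
proof -
  have "psd X (ext W X M)" using psd_ext[OF X WX] M by (simp add: effect_def)
  moreover have "psd X (ext W X (minus_op (ident W) M))" using psd_ext[OF X WX] M by (simp add: effect_def)
  ultimately show ?thesis unfolding effect_def ext_minus ext_ident[OF WX] by simp
qed

lemma effect_trace_bounds:
  assumes X: "finite X" and M: "effect X M" and \<tau>: "psd X \<tau>"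
  shows "Im (trace X (mult X M \<tau>)) = 0" "0 \<le> Re (trace X (mult X M \<tau>))"
    "Re (trace X (mult X M \<tau>)) \<le> Re (trace X \<tau>)"
proof -
  show "Im (trace X (mult X M \<tau>)) = 0" "0 \<le> Re (trace X (mult X M \<tau>))"
    using trace_mult_psd[OF X _ \<tau>] M by (auto simp: effect_def)
  have "0 \<le> Re (trace X (mult X (minus_op (ident X) M) \<tau>))"
    using trace_mult_psd[OF X _ \<tau>] M by (auto simp: effect_def)
  thus "Re (trace X (mult X M \<tau>)) \<le> Re (trace X \<tau>)"
    unfolding trace_mult_minus trace_mult_ident[OF X] by simp
qed

lemma effect_ident: assumes finW: "finite W" shows "effect W (ident W)"
proof -
  have "psd W (ident W)"
  proof -
    have "qform W (ident W) \<psi> = (\<Sum>t\<in>basis W. cnj (\<psi> t) * \<psi> t)" for \<psi>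
      unfolding qform_def ident_def using finW
      by (intro sum.cong refl) (simp add: if_distrib[of "\<lambda>x. _ * x * _"] cong: if_cong)
    moreover have "Im (\<Sum>t\<in>basis W. cnj (\<psi> t) * \<psi> t) = 0 \<and> 0 \<le> Re (\<Sum>t\<in>basis W. cnj (\<psi> t) * \<psi> t)" for \<psi>
      unfolding Im_sum Re_sum using cnj_mult_self by (simp add: sum_nonneg)
    ultimately show ?thesis by (simp add: psd_def)
  qed
  moreover have "minus_op (ident W) (ident W) = (\<lambda>s t. 0)" by (simp add: minus_op_def fun_eq_iff)
  moreover have "psd W (\<lambda>s t. 0)" by (simp add: psd_def qform_def)
  ultimately show ?thesis by (simp add: effect_def)
qed

lemma trace_ext_effect_bounds:
  assumes X: "finite X" and WX: "W \<subseteq> X" and N: "effect W N" and \<tau>: "psd X \<tau>"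
  shows "0 \<le> Re (trace X (mult X (ext W X N) \<tau>))" "Re (trace X (mult X (ext W X N) \<tau>)) \<le> Re (trace X \<tau>)"
  using effect_trace_bounds[OF X effect_ext[OF X WX N] \<tau>] by auto

lemma cauchy_schwarz_unit:
  assumes B: "finite B" and w: "(\<Sum>t\<in>B. cnj (w t) * w t) = 1"
  shows "Re (cnj (\<Sum>t\<in>B. cnj (w t) * \<psi> t) * (\<Sum>t\<in>B. cnj (w t) * \<psi> t)) \<le> Re (\<Sum>t\<in>B. cnj (\<psi> t) * \<psi> t)"
proof -
  define z where "z = (\<Sum>t\<in>B. cnj (w t) * \<psi> t)"
  have cz: "(\<Sum>t\<in>B. cnj (\<psi> t) * w t) = cnj z" unfolding z_def by (simp add: mult.commute)
  have e: "cnj (\<psi> t - z * w t) * (\<psi> t - z * w t) = cnj (\<psi> t) * \<psi> t - z * (cnj (\<psi> t) * w t)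
     - cnj z * (cnj (w t) * \<psi> t) + cnj z * z * (cnj (w t) * w t)" for t
    by (simp add: algebra_simps)
  have "(\<Sum>t\<in>B. cnj (\<psi> t - z * w t) * (\<psi> t - z * w t)) =
     (\<Sum>t\<in>B. cnj (\<psi> t) * \<psi> t) - z * cnj z - cnj z * z + cnj z * z * 1"
    unfolding e sum.distrib sum_subtractf sum_distrib_left[symmetric] cz w z_def[symmetric] ..
  hence "(\<Sum>t\<in>B. cnj (\<psi> t - z * w t) * (\<psi> t - z * w t)) = (\<Sum>t\<in>B. cnj (\<psi> t) * \<psi> t) - cnj z * z"
    by (simp add: algebra_simps)
  moreover have "0 \<le> Re (\<Sum>t\<in>B. cnj (\<psi> t - z * w t) * (\<psi> t - z * w t))"
    unfolding Re_sum by (intro sum_nonneg) (metis cnj_mult_self)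
  ultimately show ?thesis unfolding z_def[symmetric] by simp
qed

section \<open>Programs and their duals\<close>

lemma DProgD:
  assumes "e \<in> DProg V"
  shows "\<And>A. \<not> op_on V A \<Longrightarrow> e A = zero_op"
    "\<And>A. op_on V A \<Longrightarrow> op_on V (e A)"
    "\<And>A B. op_on V A \<Longrightarrow> op_on V B \<Longrightarrow> e (\<lambda>s t. A s t + B s t) = (\<lambda>s t. e A s t + e B s t)"
    "\<And>A c. op_on V A \<Longrightarrow> e (\<lambda>s t. c * A s t) = (\<lambda>s t. c * e A s t)"
    "\<And>X \<rho>. finite X \<Longrightarrow> V \<subseteq> X \<Longrightarrow> psd X \<rho> \<Longrightarrow> psd X (superext V X e \<rho>)"
    "\<And>\<rho>. psd V \<rho> \<Longrightarrow> Re (trace V (e \<rho>)) \<le> Re (trace V \<rho>)"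
  using assms by (simp_all add: DProg_def)

lemma DProg_zero: assumes "e \<in> DProg V" shows "e (\<lambda>s t. 0) = (\<lambda>s t. 0)"
proof -
  have "e (\<lambda>s t. 0 * zero_op s t) = (\<lambda>s t. 0 * e zero_op s t)"
    using DProgD(4)[OF assms, of zero_op 0] by (simp add: zero_op_def)
  thus ?thesis by (simp add: zero_op_def)
qed

lemma DProg_linear_sum:
  assumes e: "e \<in> DProg V" and K: "finite K" and B: "\<And>k. k \<in> K \<Longrightarrow> op_on V (B k)"
  shows "e (\<lambda>s t. \<Sum>k\<in>K. c k * B k s t) = (\<lambda>s t. \<Sum>k\<in>K. c k * e (B k) s t)"
  using K B
proof (induction K rule: finite_induct)
  case empty
  then show ?case using DProg_zero[OF e] by simp
next
  case (insert x F)
  have o1: "op_on V (\<lambda>s t. c x * B x s t)" using insert by (intro op_on_scale) auto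
  have o2: "op_on V (\<lambda>s t. \<Sum>k\<in>F. c k * B k s t)" using insert by (intro op_on_sum) auto
  have "e (\<lambda>s t. \<Sum>k\<in>insert x F. c k * B k s t) = e (\<lambda>s t. c x * B x s t + (\<Sum>k\<in>F. c k * B k s t))"
    using insert by simp
  also have "\<dots> = (\<lambda>s t. e (\<lambda>s t. c x * B x s t) s t + e (\<lambda>s t. \<Sum>k\<in>F. c k * B k s t) s t)"
    using DProgD(3)[OF e o1 o2] .
  also have "\<dots> = (\<lambda>s t. c x * e (B x) s t + (\<Sum>k\<in>F. c k * e (B k) s t))"
    using DProgD(4)[OF e, of "B x" "c x"] insert by simp
  also have "\<dots> = (\<lambda>s t. \<Sum>k\<in>insert x F. c k * e (B k) s t)" using insert by simp
  finally show ?case .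
qed

lemma matrix_unit_expand:
  assumes "finite V" "op_on V A"
  shows "A = (\<lambda>s t. \<Sum>p\<in>basis V \<times> basis V. A (fst p) (snd p) * ebasis V (fst p) (snd p) s t)"
proof (intro ext)
  fix s t
  show "A s t = (\<Sum>p\<in>basis V \<times> basis V. A (fst p) (snd p) * ebasis V (fst p) (snd p) s t)"
  proof (cases "s \<in> basis V \<and> t \<in> basis V")
    case True
    have "(\<Sum>p\<in>basis V \<times> basis V. A (fst p) (snd p) * ebasis V (fst p) (snd p) s t)
        = (\<Sum>p\<in>basis V \<times> basis V. if p = (s, t) then A s t else 0)"
      by (intro sum.cong refl) (auto simp: ebasis_def)
    also have "\<dots> = A s t" using True assms by simp
    finally show ?thesis by simp
  next
    case False
    then have "A s t = 0" using assms by (auto simp: op_on_def)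
    moreover have "ebasis V (fst p) (snd p) s t = 0" for p using False by (auto simp: ebasis_def)
    ultimately show ?thesis by simp
  qed
qed

lemma DProg_matrix_unit_expand:
  assumes V: "finite V" and e: "e \<in> DProg V" and A: "op_on V A"
  shows "e A = (\<lambda>l k. \<Sum>i\<in>basis V. \<Sum>j\<in>basis V. A i j * e (ebasis V i j) l k)"
proof -
  have "e A = e (\<lambda>s t. \<Sum>p\<in>basis V \<times> basis V. A (fst p) (snd p) * ebasis V (fst p) (snd p) s t)"
    using matrix_unit_expand[OF V A] by simp
  also have "\<dots> = (\<lambda>s t. \<Sum>p\<in>basis V \<times> basis V. A (fst p) (snd p) * e (ebasis V (fst p) (snd p)) s t)"
    using DProg_linear_sum[OF e, of "basis V \<times> basis V" "\<lambda>p. ebasis V (fst p) (snd p)" "\<lambda>p. A (fst p) (snd p)"] V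
    by simp
  also have "\<dots> = (\<lambda>l k. \<Sum>i\<in>basis V. \<Sum>j\<in>basis V. A i j * e (ebasis V i j) l k)"
    by (simp add: sum.cartesian_product split_def)
  finally show ?thesis .
qed

lemma superext_expand:
  assumes V: "finite V" and e: "e \<in> DProg V"
  shows "superext V X e \<rho> s t = (if s \<in> basis X \<and> t \<in> basis X then
     (\<Sum>i\<in>basis V. \<Sum>j\<in>basis V. \<rho> (merge V i s) (merge V j t) * e (ebasis V i j) (restr V s) (restr V t)) else 0)"
proof -
  define blk where "blk = (\<lambda>s' t'. if s' \<in> basis V \<and> t' \<in> basis V then \<rho> (merge V s' s) (merge V t' t) else 0)"
  have o: "op_on V blk" by (simp add: blk_def op_on_def)
  have "superext V X e \<rho> s t = (if s \<in> basis X \<and> t \<in> basis X then e blk (restr V s) (restr V t) else 0)"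
    by (simp add: superext_def blk_def)
  also have "\<dots> = (if s \<in> basis X \<and> t \<in> basis X then
     (\<Sum>i\<in>basis V. \<Sum>j\<in>basis V. \<rho> (merge V i s) (merge V j t) * e (ebasis V i j) (restr V s) (restr V t)) else 0)"
    unfolding DProg_matrix_unit_expand[OF V e o] by (simp add: blk_def)
  finally show ?thesis .
qed

lemma op_on_superext [simp]: "op_on X (superext V X e \<rho>)"
  by (simp add: op_on_def superext_def)

lemma superext_self:
  assumes V: "finite V" and e: "e \<in> DProg V" and P: "op_on V P"
  shows "superext V V e P = e P"
proof (intro ext)
  fix s t
  have blk: "(\<lambda>s' t'. if s' \<in> basis V \<and> t' \<in> basis V then P (merge V s' s) (merge V t' t) else 0) = P"
    if "s \<in> basis V" "t \<in> basis V"
  proof (intro ext)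
    fix s' t'
    have m: "merge V s' s = s'" "merge V t' t = t'" if "s' \<in> basis V" "t' \<in> basis V"
      using that \<open>s \<in> basis V\<close> \<open>t \<in> basis V\<close> by (auto simp: merge_def basis_def)
    show "(if s' \<in> basis V \<and> t' \<in> basis V then P (merge V s' s) (merge V t' t) else 0) = P s' t'"
      using m P by (auto simp: op_on_def)
  qed
  show "superext V V e P s t = e P s t"
  proof (cases "s \<in> basis V \<and> t \<in> basis V")
    case True
    then show ?thesis using blk by (simp add: superext_def)
  next
    case False
    then show ?thesis using DProgD(2)[OF e P] by (auto simp: superext_def op_on_def)
  qed
qed

lemma superext_scale:
  assumes V: "finite V" and g: "g \<in> DProg V"
  shows "superext V Y g (\<lambda>s t. \<sigma> s t / z) = (\<lambda>s t. superext V Y g \<sigma> s t / z)"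
  by (intro ext) (simp add: superext_expand[OF V g] sum_divide_distrib)

text \<open>The explicit matrix of the adjoint of \<open>e \<otimes> id\<close> (see \<open>sadj_superext_eq_sdual\<close>).\<close>

definition sdual :: "qvar set \<Rightarrow> qvar set \<Rightarrow> sop \<Rightarrow> qop \<Rightarrow> qop" where
  "sdual V X e B = (\<lambda>t' s'. if t' \<in> basis X \<and> s' \<in> basis X then
     (\<Sum>l\<in>basis V. \<Sum>k\<in>basis V. B (merge V k t') (merge V l s') * e (ebasis V (restr V s') (restr V t')) l k) else 0)"

lemma op_on_sdual [simp]: "op_on X (sdual V X e B)"
  by (simp add: op_on_def sdual_def)

lemma trace_mult_superext_sdual:
  assumes X: "finite X" and VX: "V \<subseteq> X" and e: "e \<in> DProg V"
  shows "trace X (mult X B (superext V X e \<rho>)) = trace X (mult X (sdual V X e B) \<rho>)"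
proof -
  have V: "finite V" using X VX finite_subset by auto
  define C where "C = (\<lambda>i j l k. e (ebasis V i j) l k)"
  let ?X = "basis X" and ?V = "basis V"
  have "trace X (mult X B (superext V X e \<rho>)) = (\<Sum>t\<in>?X. \<Sum>s\<in>?X. \<Sum>i\<in>?V. \<Sum>j\<in>?V.
      B t s * \<rho> (merge V i s) (merge V j t) * C i j (restr V s) (restr V t))"
    unfolding trace_mult_expand superext_expand[OF V e] C_def
    by (simp add: sum_distrib_left mult.assoc)
  also have "\<dots> = (\<Sum>t\<in>?X. \<Sum>s\<in>?X. \<Sum>i\<in>?V. \<Sum>j\<in>?V.
      B t (merge V i s) * \<rho> s (merge V j t) * C (restr V s) j i (restr V t))"
    by (rule sum.cong[OF refl], subst sum_basis_merge_swap[OF VX]) (intro sum.cong refl, simp)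
  also have "\<dots> = (\<Sum>s\<in>?X. \<Sum>i\<in>?V. \<Sum>t\<in>?X. \<Sum>j\<in>?V.
      B t (merge V i s) * \<rho> s (merge V j t) * C (restr V s) j i (restr V t))"
    by (subst sum.swap[where A = ?X and B = ?X], rule sum.cong[OF refl], rule sum.swap)
  also have "\<dots> = (\<Sum>s\<in>?X. \<Sum>i\<in>?V. \<Sum>t\<in>?X. \<Sum>j\<in>?V.
      B (merge V j t) (merge V i s) * \<rho> s t * C (restr V s) (restr V t) i j)"
    by (rule sum.cong[OF refl], rule sum.cong[OF refl], subst sum_basis_merge_swap[OF VX])
       (intro sum.cong refl, simp)
  also have "\<dots> = (\<Sum>t\<in>?X. \<Sum>s\<in>?X. \<Sum>i\<in>?V. \<Sum>j\<in>?V.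
      B (merge V j t) (merge V i s) * C (restr V s) (restr V t) i j * \<rho> s t)"
    by (subst sum.swap, rule sum.cong[OF refl], subst sum.swap) (simp add: mult_ac)
  also have "\<dots> = trace X (mult X (sdual V X e B) \<rho>)"
    unfolding trace_mult_expand sdual_def C_def
    by (intro sum.cong refl) (simp add: sum_distrib_right)
  finally show ?thesis .
qed

lemma sadj_superext_eq_sdual:
  assumes W: "finite W" and VW: "V \<subseteq> W" and e: "e \<in> DProg V"
  shows "sadj W (superext V W e) N = sdual V W e N"
proof (intro ext)
  fix v u
  show "sadj W (superext V W e) N v u = sdual V W e N v u"
  proof (cases "v \<in> basis W \<and> u \<in> basis W")
    case True
    define D where "D = sdual V W e N"
    have "sadj W (superext V W e) N v u = trace W (mult W N (superext V W e (ebasis W u v)))"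
      using True by (simp add: sadj_def trace_mult_comm)
    also have "\<dots> = trace W (mult W D (ebasis W u v))" unfolding D_def by (rule trace_mult_superext_sdual[OF W VW e])
    also have "\<dots> = (\<Sum>a\<in>basis W. \<Sum>b\<in>basis W. D a b * ebasis W u v b a)" by (rule trace_mult_expand)
    also have "\<dots> = (\<Sum>a\<in>basis W. if a = v then D a u else 0)"
    proof (rule sum.cong[OF refl])
      fix a assume a: "a \<in> basis W"
      have "(\<Sum>b\<in>basis W. D a b * ebasis W u v b a) = (\<Sum>b\<in>basis W. if b = u then (if a = v then D a u else 0) else 0)"
        using True by (intro sum.cong refl) (auto simp: ebasis_def)
      also have "\<dots> = (if a = v then D a u else 0)" using True W by simp
      finally show "(\<Sum>b\<in>basis W. D a b * ebasis W u v b a) = (if a = v then D a u else 0)" .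
    qed
    also have "\<dots> = D v u" using True W by simp
    finally show ?thesis unfolding D_def .
  next
    case False
    then show ?thesis by (auto simp: sadj_def sdual_def)
  qed
qed

lemma ext_sdual:
  assumes VW: "V \<subseteq> W" and WX: "W \<subseteq> X"
  shows "ext W X (sdual V W e N) = sdual V X e (ext W X N)"
proof (intro ext)
  fix t' s'
  show "ext W X (sdual V W e N) t' s' = sdual V X e (ext W X N) t' s'"
  proof (cases "t' \<in> basis X \<and> s' \<in> basis X")
    case bx: True
    show ?thesis
    proof (cases "\<forall>q\<in>X - W. t' q = s' q")
      case True
      have "ext W X (sdual V W e N) t' s' = sdual V W e N (restr W t') (restr W s')"
        using bx True by (simp add: ext_def)
      also have "\<dots> = (\<Sum>l\<in>basis V. \<Sum>k\<in>basis V. N (merge V k (restr W t')) (merge V l (restr W s')) * e (ebasis V (restr V s') (restr V t')) l k)"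
        using VW by (simp add: sdual_def restr_restr_subset)
      also have "\<dots> = sdual V X e (ext W X N) t' s'"
      proof -
        have "ext W X N (merge V k t') (merge V l s') = N (merge V k (restr W t')) (merge V l (restr W s'))"
          if "k \<in> basis V" "l \<in> basis V" for k l
        proof -
          have "merge V k t' \<in> basis X" "merge V l s' \<in> basis X"
            using that bx VW WX by (auto intro: merge_in_basis)
          moreover have "\<forall>q\<in>X - W. merge V k t' q = merge V l s' q" using True VW by (auto simp: merge_def)
          ultimately show ?thesis by (simp add: ext_def restr_merge_subset[OF VW])
        qed
        thus ?thesis unfolding sdual_def using bx by (simp cong: sum.cong)
      qed
      finally show ?thesis .
    next
      case False
      then obtain q where q: "q \<in> X - W" "t' q \<noteq> s' q" by blast
      have z: "ext W X N (merge V k t') (merge V l s') = 0" for k l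
        using q VW unfolding ext_def by (auto simp: merge_def)
      have "ext W X (sdual V W e N) t' s' = 0" using q unfolding ext_def by auto
      moreover have "sdual V X e (ext W X N) t' s' = 0" by (simp add: sdual_def z)
      ultimately show ?thesis by simp
    qed
  next
    case False
    then show ?thesis by (auto simp: ext_def sdual_def)
  qed
qed

lemma trace_ext_sadj_superext:
  assumes X: "finite X" and VW: "V \<subseteq> W" and WX: "W \<subseteq> X" and e: "e \<in> DProg V"
  shows "trace X (mult X (ext W X (sadj W (superext V W e) N)) \<rho>) = trace X (mult X (ext W X N) (superext V X e \<rho>))"
proof -
  have W: "finite W" using X WX finite_subset by auto
  show ?thesis
    unfolding sadj_superext_eq_sdual[OF W VW e] ext_sdual[OF VW WX] trace_mult_superext_sdual[OF X _ e, symmetric]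
    using VW WX by (simp add: trace_mult_superext_sdual[OF X _ e])
qed

lemma qform_sdual:
  assumes X: "finite X" and VX: "V \<subseteq> X" and e: "e \<in> DProg V"
  shows "qform X (sdual V X e N) \<psi> = trace X (mult X N (superext V X e (ketbra X \<psi>)))"
  unfolding qform_eq_trace_ketbra trace_mult_superext_sdual[OF X VX e] ..

lemma psd_ident_minus_sdual_ident:
  assumes V: "finite V" and e: "e \<in> DProg V"
  shows "psd V (minus_op (ident V) (sdual V V e (ident V)))"
proof -
  have "Im (qform V (minus_op (ident V) (sdual V V e (ident V))) \<psi>) = 0 \<and>
        0 \<le> Re (qform V (minus_op (ident V) (sdual V V e (ident V))) \<psi>)" for \<psi>
  proof -
    let ?P = "ketbra V \<psi>"
    have "qform V (sdual V V e (ident V)) \<psi> = trace V (mult V (ident V) (superext V V e ?P))"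
      by (rule qform_sdual[OF V _ e]) simp
    also have "\<dots> = trace V (e ?P)" using trace_mult_ident[OF V] superext_self[OF V e op_on_ketbra] by simp
    finally have d: "qform V (sdual V V e (ident V)) \<psi> = trace V (e ?P)" .
    have i: "qform V (ident V) \<psi> = trace V ?P" using trace_ketbra[OF V] by simp
    have pe: "psd V (e ?P)" using DProgD(5)[OF e V _ psd_ketbra] superext_self[OF V e op_on_ketbra] by simp
    have t1: "Im (trace V (e ?P)) = 0" using psd_trace_nonneg[OF V pe] by simp
    have t2: "Im (trace V ?P) = 0" using psd_trace_nonneg[OF V psd_ketbra] by simp
    have t3: "Re (trace V (e ?P)) \<le> Re (trace V ?P)" using DProgD(6)[OF e psd_ketbra] .
    show ?thesis unfolding qform_minus d i using t1 t2 t3 by simp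
  qed
  moreover have "op_on V (minus_op (ident V) (sdual V V e (ident V)))" by (simp add: op_on_minus)
  ultimately show ?thesis by (simp add: psd_def)
qed

lemma trace_superext_le:
  assumes X: "finite X" and VX: "V \<subseteq> X" and e: "e \<in> DProg V" and \<rho>: "psd X \<rho>"
  shows "Re (trace X (superext V X e \<rho>)) \<le> Re (trace X \<rho>)"
proof -
  have V: "finite V" using X VX finite_subset by auto
  let ?D = "sdual V V e (ident V)"
  have "trace X (superext V X e \<rho>) = trace X (mult X (ext V X (ident V)) (superext V X e \<rho>))"
    using ext_ident[OF VX] trace_mult_ident[OF X] by simp
  also have "\<dots> = trace X (mult X (sdual V X e (ext V X (ident V))) \<rho>)" by (rule trace_mult_superext_sdual[OF X VX e])
  also have "\<dots> = trace X (mult X (ext V X ?D) \<rho>)" using ext_sdual[of V V X e "ident V"] VX by simp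
  finally have a: "trace X (superext V X e \<rho>) = trace X (mult X (ext V X ?D) \<rho>)" .
  have b: "trace X \<rho> = trace X (mult X (ext V X (ident V)) \<rho>)"
    using ext_ident[OF VX] trace_mult_ident[OF X] by simp
  have "trace X \<rho> - trace X (superext V X e \<rho>) = trace X (mult X (ext V X (minus_op (ident V) ?D)) \<rho>)"
    unfolding a b ext_minus trace_mult_minus ..
  moreover have "0 \<le> Re (trace X (mult X (ext V X (minus_op (ident V) ?D)) \<rho>))"
    using trace_mult_psd(2)[OF X psd_ext[OF X VX psd_ident_minus_sdual_ident[OF V e]] \<rho>] .
  ultimately have "0 \<le> Re (trace X \<rho> - trace X (superext V X e \<rho>))" by simp
  thus ?thesis by simp
qed

lemma effect_sdual:
  assumes W: "finite W" and VW: "V \<subseteq> W" and e: "e \<in> DProg V" and N: "effect W N"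
  shows "effect W (sdual V W e N)"
proof -
  have NP: "psd W N" using N by (simp add: effect_def)
  have "Im (qform W (sdual V W e N) \<psi>) = 0 \<and> 0 \<le> Re (qform W (sdual V W e N) \<psi>) \<and>
        Im (qform W (minus_op (ident W) (sdual V W e N)) \<psi>) = 0 \<and> 0 \<le> Re (qform W (minus_op (ident W) (sdual V W e N)) \<psi>)" for \<psi>
  proof -
    let ?P = "ketbra W \<psi>"
    have sp: "psd W (superext V W e ?P)" using DProgD(5)[OF e W VW psd_ketbra] .
    have q: "qform W (sdual V W e N) \<psi> = trace W (mult W N (superext V W e ?P))" by (rule qform_sdual[OF W VW e])
    have i: "qform W (ident W) \<psi> = trace W ?P" using trace_ketbra[OF W] by simp
    have t1: "Im (trace W (mult W N (superext V W e ?P))) = 0" "0 \<le> Re (trace W (mult W N (superext V W e ?P)))"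
      "Re (trace W (mult W N (superext V W e ?P))) \<le> Re (trace W (superext V W e ?P))"
      using effect_trace_bounds[OF W N sp] by auto
    have t2: "Re (trace W (superext V W e ?P)) \<le> Re (trace W ?P)" by (rule trace_superext_le[OF W VW e psd_ketbra])
    have t3: "Im (trace W ?P) = 0" using psd_trace_nonneg[OF W psd_ketbra] by simp
    show ?thesis unfolding qform_minus q i using t1 t2 t3 by simp
  qed
  thus ?thesis by (simp add: effect_def psd_def op_on_minus)
qed

section \<open>The maximally entangled state\<close>

locale pairing =
  fixes V V' :: "qvar set"
  assumes finV: "finite V" and finV': "finite V'" and card_eq: "card V' = card V"
    and disj: "V \<inter> V' = {}"
begin

abbreviation "\<pi> \<equiv> pairvar V V'"
abbreviation "\<omega> \<equiv> omega_vec V V'"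
abbreviation "X' \<equiv> V \<union> V'"

lemma finX': "finite X'"
  using finV finV' by simp

lemma nth_LEAST_index:
  assumes "q \<in> V"
  defines "i \<equiv> LEAST i. sorted_list_of_set V ! i = q"
  shows "sorted_list_of_set V ! i = q" "i < card V"
proof -
  obtain j where j: "j < card V" "sorted_list_of_set V ! j = q"
    using assms finV by (metis in_set_conv_nth length_sorted_list_of_set set_sorted_list_of_set)
  from j(2) show "sorted_list_of_set V ! i = q" unfolding i_def by (rule LeastI)
  have "i \<le> j" unfolding i_def using j(2) by (rule Least_le)
  with j(1) show "i < card V" by simp
qed

lemma pairvar_in: "q \<in> V \<Longrightarrow> \<pi> q \<in> V'"
  unfolding pairvar_def using nth_LEAST_index(2) card_eq finV'
  by (metis length_sorted_list_of_set nth_mem set_sorted_list_of_set)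

lemma inj_on_pairvar: "inj_on \<pi> V"
proof (rule inj_onI)
  fix q1 q2 assume q: "q1 \<in> V" "q2 \<in> V" "\<pi> q1 = \<pi> q2"
  then have "(LEAST i. sorted_list_of_set V ! i = q1) = (LEAST i. sorted_list_of_set V ! i = q2)"
    unfolding pairvar_def using nth_LEAST_index(2) card_eq
    by (metis distinct_sorted_list_of_set length_sorted_list_of_set nth_eq_iff_index_eq)
  then show "q1 = q2" using nth_LEAST_index(1) q(1,2) by metis
qed

lemma pairvar_image: "\<pi> ` V = V'"
proof -
  have "\<pi> ` V \<subseteq> V'" using pairvar_in by auto
  moreover have "card (\<pi> ` V) = card V'" using card_image[OF inj_on_pairvar] card_eq by simp
  ultimately show ?thesis using card_subset_eq finV' by blast
qed

definition \<pi>inv :: "qvar \<Rightarrow> qvar" where "\<pi>inv = inv_into V \<pi>"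

lemma pairvar_inv: "q \<in> V' \<Longrightarrow> \<pi>inv q \<in> V \<and> \<pi> (\<pi>inv q) = q"
  unfolding \<pi>inv_def using pairvar_image by (metis inv_into_into f_inv_into_f)

lemma pairvar_inv_pairvar: "q \<in> V \<Longrightarrow> \<pi>inv (\<pi> q) = q"
  unfolding \<pi>inv_def using inj_on_pairvar by (simp add: inv_into_f_f)

text \<open>\<open>tensor_state l m\<close> is the basis state \<open>|l\<rangle>|m\<rangle>\<close> of \<open>X' = V \<union> V'\<close>, with \<open>m\<close> transported
  to \<open>V'\<close> along \<open>\<pi>\<close>; \<open>snd_state\<close> reads the \<open>V'\<close>-component back as a basis state of \<open>V\<close>.\<close>

definition tensor_state :: "bst \<Rightarrow> bst \<Rightarrow> bst" where
  "tensor_state l m = (\<lambda>q. if q \<in> V then l q else if q \<in> V' then m (\<pi>inv q) else False)"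

definition snd_state :: "bst \<Rightarrow> bst" where
  "snd_state s = (\<lambda>q. if q \<in> V then s (\<pi> q) else False)"

lemma tensor_state_in_basis: "tensor_state l m \<in> basis X'"
  by (simp add: tensor_state_def basis_def)

lemma snd_state_in_basis [simp]: "snd_state s \<in> basis V"
  by (simp add: snd_state_def basis_def)

lemma restr_tensor_state: "l \<in> basis V \<Longrightarrow> restr V (tensor_state l m) = l"
  by (auto simp: tensor_state_def restr_def basis_def)

lemma snd_tensor_state: "m \<in> basis V \<Longrightarrow> snd_state (tensor_state l m) = m"
  using pairvar_in disj pairvar_inv_pairvar
  by (fastforce simp: snd_state_def tensor_state_def basis_def)

lemma tensor_state_restr_snd: "s \<in> basis X' \<Longrightarrow> tensor_state (restr V s) (snd_state s) = s"
  using pairvar_inv by (fastforce simp: tensor_state_def snd_state_def restr_def basis_def)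

lemma snd_state_merge: "snd_state (merge V i s) = snd_state s"
  using pairvar_in disj by (fastforce simp: snd_state_def merge_def)

lemma merge_tensor_state_in_basis: "i \<in> basis V \<Longrightarrow> merge V i (tensor_state l m) \<in> basis X'"
  using merge_in_basis_Un[of i V "tensor_state l m" X'] tensor_state_in_basis by simp

lemma sum_basis_tensor_state:
  "(\<Sum>s\<in>basis X'. f s) = (\<Sum>l\<in>basis V. \<Sum>m\<in>basis V. f (tensor_state l m))"
proof -
  have "(\<Sum>s\<in>basis X'. f s) = (\<Sum>(l, m)\<in>basis V \<times> basis V. f (tensor_state l m))"
    by (rule sum.reindex_bij_witness[where i = "\<lambda>(l, m). tensor_state l m"
        and j = "\<lambda>s. (restr V s, snd_state s)"])
       (auto simp: tensor_state_restr_snd tensor_state_in_basis restr_tensor_state snd_tensor_state)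
  then show ?thesis by (simp add: sum.cartesian_product)
qed

definition dimV :: real where "dimV = 2 ^ card V"

lemma dimV_pos: "dimV > 0"
  by (simp add: dimV_def)

lemma omega_vec_tensor_state:
  assumes "l \<in> basis V" "m \<in> basis V"
  shows "\<omega> (tensor_state l m) = (if l = m then complex_of_real (1 / sqrt dimV) else 0)"
proof -
  have "(\<forall>q\<in>V. tensor_state l m q = tensor_state l m (\<pi> q))
      \<longleftrightarrow> restr V (tensor_state l m) = snd_state (tensor_state l m)"
    by (auto simp: restr_def snd_state_def fun_eq_iff)
  also have "\<dots> \<longleftrightarrow> l = m" using assms by (simp add: restr_tensor_state snd_tensor_state)
  finally show ?thesis using tensor_state_in_basis by (simp add: omega_vec_def dimV_def)
qed

lemma omega_vec_outside: "s \<notin> basis X' \<Longrightarrow> \<omega> s = 0"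
  by (simp add: omega_vec_def)

lemma op_on_Omega: "op_on X' (Omega V V')"
  by (auto simp: op_on_def Omega_def omega_vec_outside)

lemma omega_vec_norm: "(\<Sum>s\<in>basis X'. cnj (\<omega> s) * \<omega> s) = 1"
proof -
  have "(\<Sum>s\<in>basis X'. cnj (\<omega> s) * \<omega> s)
      = (\<Sum>l\<in>basis V. \<Sum>m\<in>basis V. if m = l then complex_of_real (1 / dimV) else 0)"
    unfolding sum_basis_tensor_state using dimV_pos
    by (intro sum.cong refl) (auto simp: omega_vec_tensor_state simp flip: of_real_mult)
  also have "\<dots> = of_nat (card (basis V)) * complex_of_real (1 / dimV)"
    using finV by simp
  also have "\<dots> = 1"
    using card_basis[OF finV] dimV_pos by (simp add: dimV_def)
  finally show ?thesis .
qed

lemma psd_Omega: "psd X' (Omega V V')"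
  using op_on_Omega psd_kernel_rank_one[of "basis X'" \<omega>]
  by (simp add: psd_iff_psd_kernel Omega_def)

lemma psd_ident_minus_Omega: "psd X' (minus_op (ident X') (Omega V V'))"
proof -
  have "Im (qform X' (minus_op (ident X') (Omega V V')) \<psi>) = 0
      \<and> 0 \<le> Re (qform X' (minus_op (ident X') (Omega V V')) \<psi>)" for \<psi>
  proof -
    define z where "z = (\<Sum>t\<in>basis X'. cnj (\<omega> t) * \<psi> t)"
    have "qform X' (Omega V V') \<psi> = cnj z * z"
      unfolding qform_eq_quad_form Omega_def quad_form_rank_one z_def ..
    moreover have "qform X' (ident X') \<psi> = (\<Sum>t\<in>basis X'. cnj (\<psi> t) * \<psi> t)"
      unfolding trace_ketbra[OF finX', symmetric] trace_def ketbra_def by (simp add: mult.commute)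
    moreover have "Re (cnj z * z) \<le> Re (\<Sum>t\<in>basis X'. cnj (\<psi> t) * \<psi> t)"
      unfolding z_def by (rule cauchy_schwarz_unit[OF finite_basis[OF finX'] omega_vec_norm])
    ultimately show ?thesis
      unfolding qform_minus by (simp add: Im_sum algebra_simps)
  qed
  then show ?thesis using op_on_Omega by (simp add: psd_def op_on_minus)
qed

lemma trace_mult_Omega:
  "trace X' (mult X' (Omega V V') S)
     = (\<Sum>k\<in>basis V. \<Sum>l\<in>basis V. S (tensor_state l l) (tensor_state k k)) / complex_of_real dimV"
proof -
  let ?B = "basis V"
  define T where "T k l = S (tensor_state l l) (tensor_state k k) / complex_of_real dimV" for k l
  have entry: "Omega V V' (tensor_state k k') (tensor_state l l') * S (tensor_state l l') (tensor_state k k')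
      = (if k' = k then if l' = l then T k l else 0 else 0)"
    if "k \<in> ?B" "k' \<in> ?B" "l \<in> ?B" "l' \<in> ?B" for k k' l l'
    using that dimV_pos
    by (auto simp: Omega_def omega_vec_tensor_state T_def field_simps simp flip: of_real_mult)
  have collapse: "(\<Sum>k'\<in>?B. \<Sum>l\<in>?B. \<Sum>l'\<in>?B. if k' = k then if l' = l then T k l else 0 else 0)
      = (\<Sum>l\<in>?B. T k l)" if "k \<in> ?B" for k
  proof -
    have "(\<Sum>k'\<in>?B. \<Sum>l\<in>?B. \<Sum>l'\<in>?B. if k' = k then if l' = l then T k l else 0 else 0)
        = (\<Sum>k'\<in>?B. if k' = k then \<Sum>l\<in>?B. T k l else 0)"
      using finV by (intro sum.cong refl) auto
    also have "\<dots> = (\<Sum>l\<in>?B. T k l)" using finV that by simp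
    finally show ?thesis .
  qed
  have "trace X' (mult X' (Omega V V') S) = (\<Sum>k\<in>?B. \<Sum>k'\<in>?B. \<Sum>l\<in>?B. \<Sum>l'\<in>?B.
      Omega V V' (tensor_state k k') (tensor_state l l') * S (tensor_state l l') (tensor_state k k'))"
    unfolding trace_mult_expand sum_basis_tensor_state ..
  also have "\<dots> = (\<Sum>k\<in>?B. \<Sum>l\<in>?B. T k l)"
    by (simp add: entry collapse cong: sum.cong)
  finally show ?thesis by (simp add: T_def sum_divide_distrib)
qed

lemma effect_Omega: "effect X' (Omega V V')"
  using psd_Omega psd_ident_minus_Omega by (simp add: effect_def)

end

section \<open>Transfer to the maximally entangled state\<close>

lemma sum_reorder6:
  "(\<Sum>k\<in>A. \<Sum>b\<in>B. \<Sum>l\<in>A. \<Sum>a\<in>B. \<Sum>i\<in>A. \<Sum>j\<in>A. F k b l a i j) =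
   (\<Sum>i\<in>A. \<Sum>j\<in>A. \<Sum>k\<in>A. \<Sum>l\<in>A. \<Sum>a\<in>B. \<Sum>b\<in>B. F k b l a i j)"
proof -
  have "(\<Sum>k\<in>A. \<Sum>b\<in>B. \<Sum>l\<in>A. \<Sum>a\<in>B. \<Sum>i\<in>A. \<Sum>j\<in>A. F k b l a i j) =
     (\<Sum>p\<in>A \<times> B \<times> A \<times> B \<times> A \<times> A. case p of (k, b, l, a, i, j) \<Rightarrow> F k b l a i j)"
    by (simp add: sum.cartesian_product)
  also have "\<dots> = (\<Sum>p\<in>A \<times> A \<times> A \<times> A \<times> B \<times> B. case p of (i, j, k, l, a, b) \<Rightarrow> F k b l a i j)"
    by (rule sum.reindex_bij_witness[where i = "\<lambda>(i, j, k, l, a, b). (k, b, l, a, i, j)"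
        and j = "\<lambda>(k, b, l, a, i, j). (i, j, k, l, a, b)"]) auto
  also have "\<dots> = (\<Sum>i\<in>A. \<Sum>j\<in>A. \<Sum>k\<in>A. \<Sum>l\<in>A. \<Sum>a\<in>B. \<Sum>b\<in>B. F k b l a i j)"
    by (simp add: sum.cartesian_product)
  finally show ?thesis .
qed

lemma sum_swap_pairs:
  "(\<Sum>k\<in>A. \<Sum>l\<in>A. \<Sum>i\<in>A. \<Sum>j\<in>A. F k l i j) = (\<Sum>i\<in>A. \<Sum>j\<in>A. \<Sum>k\<in>A. \<Sum>l\<in>A. F k l i j)"
proof -
  have "(\<Sum>k\<in>A. \<Sum>l\<in>A. \<Sum>i\<in>A. \<Sum>j\<in>A. F k l i j) =
     (\<Sum>p\<in>A \<times> A \<times> A \<times> A. case p of (k, l, i, j) \<Rightarrow> F k l i j)"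
    by (simp add: sum.cartesian_product)
  also have "\<dots> = (\<Sum>p\<in>A \<times> A \<times> A \<times> A. case p of (i, j, k, l) \<Rightarrow> F k l i j)"
    by (rule sum.reindex_bij_witness[where i = "\<lambda>(i, j, k, l). (k, l, i, j)"
        and j = "\<lambda>(k, l, i, j). (i, j, k, l)"]) auto
  also have "\<dots> = (\<Sum>i\<in>A. \<Sum>j\<in>A. \<Sum>k\<in>A. \<Sum>l\<in>A. F k l i j)"
    by (simp add: sum.cartesian_product)
  finally show ?thesis .
qed

lemma sum_reorder7:
  "(\<Sum>i\<in>A. \<Sum>l\<in>A. \<Sum>j\<in>A. \<Sum>k\<in>A. \<Sum>a\<in>B. \<Sum>b\<in>B. \<Sum>r\<in>C. F i l j k a b r) =
   (\<Sum>r\<in>C. \<Sum>i\<in>A. \<Sum>a\<in>B. \<Sum>j\<in>A. \<Sum>b\<in>B. \<Sum>l\<in>A. \<Sum>k\<in>A. F i l j k a b r)"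
proof -
  have "(\<Sum>i\<in>A. \<Sum>l\<in>A. \<Sum>j\<in>A. \<Sum>k\<in>A. \<Sum>a\<in>B. \<Sum>b\<in>B. \<Sum>r\<in>C. F i l j k a b r) =
     (\<Sum>p\<in>A \<times> A \<times> A \<times> A \<times> B \<times> B \<times> C. case p of (i, l, j, k, a, b, r) \<Rightarrow> F i l j k a b r)"
    by (simp add: sum.cartesian_product)
  also have "\<dots> = (\<Sum>p\<in>C \<times> A \<times> B \<times> A \<times> B \<times> A \<times> A. case p of (r, i, a, j, b, l, k) \<Rightarrow> F i l j k a b r)"
    by (rule sum.reindex_bij_witness[where i = "\<lambda>(r, i, a, j, b, l, k). (i, l, j, k, a, b, r)"
        and j = "\<lambda>(i, l, j, k, a, b, r). (r, i, a, j, b, l, k)"]) auto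
  also have "\<dots> = (\<Sum>r\<in>C. \<Sum>i\<in>A. \<Sum>a\<in>B. \<Sum>j\<in>A. \<Sum>b\<in>B. \<Sum>l\<in>A. \<Sum>k\<in>A. F i l j k a b r)"
    by (simp add: sum.cartesian_product)
  finally show ?thesis .
qed

locale choi_setting = pairing +
  fixes X W :: "qvar set" and M \<rho> :: qop
  assumes finX: "finite X" and VX: "V \<subseteq> X" and WX: "W \<subseteq> X"
    and psd_M: "psd W M" and psd_\<rho>: "psd X \<rho>"
begin

text \<open>By linearity, \<open>tr (M (g \<otimes> id) \<rho>)\<close> is a bilinear pairing of \<open>coeff\<close> with the matrix entries
  of \<open>g\<close> on the matrix units of \<open>V\<close>; \<open>choi\<close> stores \<open>coeff\<close> as an operator on \<open>V \<union> V'\<close> whose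
  \<open>\<Omega>\<close>-expectation produces the same pairing.\<close>

definition coeff :: "bst \<Rightarrow> bst \<Rightarrow> bst \<Rightarrow> bst \<Rightarrow> complex" where
  "coeff i j k l = (\<Sum>a\<in>basis (X - V). \<Sum>b\<in>basis (X - V).
     \<rho> (merge V i a) (merge V j b) * ext W X M (merge V k b) (merge V l a))"

lemma trace_effect_superext_coeff:
  assumes g: "g \<in> DProg V"
  shows "trace X (mult X (ext W X M) (superext V X g \<rho>)) =
    (\<Sum>i\<in>basis V. \<Sum>j\<in>basis V. \<Sum>k\<in>basis V. \<Sum>l\<in>basis V. coeff i j k l * g (ebasis V i j) l k)"
proof -
  let ?O = "basis (X - V)" and ?B = "basis V"
  have "trace X (mult X (ext W X M) (superext V X g \<rho>)) = (\<Sum>t\<in>basis X. \<Sum>s\<in>basis X. ext W X M t s *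
     (\<Sum>i\<in>?B. \<Sum>j\<in>?B. \<rho> (merge V i s) (merge V j t) * g (ebasis V i j) (restr V s) (restr V t)))"
    unfolding trace_mult_expand by (intro sum.cong refl) (simp add: superext_expand[OF finV g])
  also have "\<dots> = (\<Sum>k\<in>?B. \<Sum>b\<in>?O. \<Sum>l\<in>?B. \<Sum>a\<in>?O. \<Sum>i\<in>?B. \<Sum>j\<in>?B.
      ext W X M (merge V k b) (merge V l a) * (\<rho> (merge V i a) (merge V j b) * g (ebasis V i j) l k))"
    unfolding sum_basis_split[OF finX VX] by (intro sum.cong refl) (simp add: sum_distrib_left)
  also have "\<dots> = (\<Sum>i\<in>?B. \<Sum>j\<in>?B. \<Sum>k\<in>?B. \<Sum>l\<in>?B. \<Sum>a\<in>?O. \<Sum>b\<in>?O.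
      ext W X M (merge V k b) (merge V l a) * (\<rho> (merge V i a) (merge V j b) * g (ebasis V i j) l k))"
    by (rule sum_reorder6)
  also have "\<dots> = (\<Sum>i\<in>?B. \<Sum>j\<in>?B. \<Sum>k\<in>?B. \<Sum>l\<in>?B. coeff i j k l * g (ebasis V i j) l k)"
    unfolding coeff_def sum_distrib_right by (intro sum.cong refl) (simp add: mult.commute mult.left_commute)
  finally show ?thesis .
qed

definition choi :: qop where
  "choi s t = (if s \<in> basis X' \<and> t \<in> basis X'
     then complex_of_real dimV * coeff (restr V s) (restr V t) (snd_state t) (snd_state s) else 0)"

lemma op_on_choi: "op_on X' choi"
  by (simp add: op_on_def choi_def)

lemma trace_Omega_superext_choi:
  assumes g: "g \<in> DProg V"
  shows "trace X' (mult X' (Omega V V') (superext V X' g choi)) =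
    (\<Sum>i\<in>basis V. \<Sum>j\<in>basis V. \<Sum>k\<in>basis V. \<Sum>l\<in>basis V. coeff i j k l * g (ebasis V i j) l k)"
proof -
  let ?B = "basis V"
  have entry: "superext V X' g choi (tensor_state l l) (tensor_state k k)
      = complex_of_real dimV * (\<Sum>i\<in>?B. \<Sum>j\<in>?B. coeff i j k l * g (ebasis V i j) l k)"
    if "k \<in> ?B" "l \<in> ?B" for k l
    unfolding superext_expand[OF finV g] sum_distrib_left using that tensor_state_in_basis
    by (auto intro!: sum.cong simp: choi_def merge_tensor_state_in_basis snd_state_merge
        snd_tensor_state restr_tensor_state mult.assoc)
  have "trace X' (mult X' (Omega V V') (superext V X' g choi))
      = (\<Sum>k\<in>?B. \<Sum>l\<in>?B. \<Sum>i\<in>?B. \<Sum>j\<in>?B. coeff i j k l * g (ebasis V i j) l k)"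
    unfolding trace_mult_Omega using dimV_pos
    by (simp add: entry sum_distrib_left[symmetric] cong: sum.cong)
  also have "\<dots> = (\<Sum>i\<in>?B. \<Sum>j\<in>?B. \<Sum>k\<in>?B. \<Sum>l\<in>?B. coeff i j k l * g (ebasis V i j) l k)"
    by (rule sum_swap_pairs)
  finally show ?thesis .
qed

lemma qform_choi_eq_sum:
  "\<exists>(n::nat) \<chi>. qform X' choi \<psi> = complex_of_real dimV * (\<Sum>r<n. qform X \<rho> (\<chi> r))"
proof -
  obtain n :: nat and f where f: "\<forall>x\<in>basis X. \<forall>y\<in>basis X. ext W X M x y = (\<Sum>r<n. f r x * cnj (f r y))"
    using psd_gram_factor[OF finX psd_ext[OF finX WX psd_M]] by blast
  let ?B = "basis V" and ?O = "basis (X - V)"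
  define \<phi> where "\<phi> i l = \<psi> (tensor_state i l)" for i l
  define \<chi> where "\<chi> r s = (\<Sum>k\<in>?B. \<phi> (restr V s) k * f r (merge V k s))" for r s
  define T where "T i l j k a b r = cnj (\<phi> i l) * \<phi> j k * \<rho> (merge V i a) (merge V j b)
      * f r (merge V k b) * cnj (f r (merge V l a))" for i l j k a b r
  have mb: "merge V k b \<in> basis X" if "k \<in> ?B" "b \<in> ?O" for k b using merge_in_basis_Diff[OF VX that] .
  have "qform X' choi \<psi> = (\<Sum>i\<in>?B. \<Sum>l\<in>?B. \<Sum>j\<in>?B. \<Sum>k\<in>?B. cnj (\<phi> i l) * choi (tensor_state i l) (tensor_state j k) * \<phi> j k)"
    unfolding qform_def sum_basis_tensor_state \<phi>_def ..
  also have "\<dots> = (\<Sum>i\<in>?B. \<Sum>l\<in>?B. \<Sum>j\<in>?B. \<Sum>k\<in>?B. complex_of_real dimV * (\<Sum>a\<in>?O. \<Sum>b\<in>?O. \<Sum>r<n. T i l j k a b r))"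
  proof (intro sum.cong refl)
    fix i l j k assume h: "i \<in> ?B" "l \<in> ?B" "j \<in> ?B" "k \<in> ?B"
    have "choi (tensor_state i l) (tensor_state j k) = complex_of_real dimV * coeff i j k l"
      using h tensor_state_in_basis by (simp add: choi_def restr_tensor_state snd_tensor_state)
    also have "coeff i j k l = (\<Sum>a\<in>?O. \<Sum>b\<in>?O. \<Sum>r<n. \<rho> (merge V i a) (merge V j b) * (f r (merge V k b) * cnj (f r (merge V l a))))"
      unfolding coeff_def using f mb h by (intro sum.cong refl) (simp add: sum_distrib_left)
    finally show "cnj (\<phi> i l) * choi (tensor_state i l) (tensor_state j k) * \<phi> j k = complex_of_real dimV * (\<Sum>a\<in>?O. \<Sum>b\<in>?O. \<Sum>r<n. T i l j k a b r)"
      unfolding T_def by (simp add: sum_distrib_left sum_distrib_right mult_ac)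
  qed
  also have "\<dots> = complex_of_real dimV * (\<Sum>i\<in>?B. \<Sum>l\<in>?B. \<Sum>j\<in>?B. \<Sum>k\<in>?B. \<Sum>a\<in>?O. \<Sum>b\<in>?O. \<Sum>r<n. T i l j k a b r)"
    by (simp add: sum_distrib_left)
  also have "(\<Sum>i\<in>?B. \<Sum>l\<in>?B. \<Sum>j\<in>?B. \<Sum>k\<in>?B. \<Sum>a\<in>?O. \<Sum>b\<in>?O. \<Sum>r<n. T i l j k a b r)
     = (\<Sum>r<n. \<Sum>i\<in>?B. \<Sum>a\<in>?O. \<Sum>j\<in>?B. \<Sum>b\<in>?O. \<Sum>l\<in>?B. \<Sum>k\<in>?B. T i l j k a b r)"
    by (rule sum_reorder7)
  also have "\<dots> = (\<Sum>r<n. qform X \<rho> (\<chi> r))"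
  proof (rule sum.cong[OF refl])
    fix r
    have cm: "\<chi> r (merge V i a) = (\<Sum>k\<in>?B. \<phi> i k * f r (merge V k a))" if "i \<in> ?B" for i a
      unfolding \<chi>_def using that by simp
    have "qform X \<rho> (\<chi> r) = (\<Sum>i\<in>?B. \<Sum>a\<in>?O. \<Sum>j\<in>?B. \<Sum>b\<in>?O.
        cnj (\<chi> r (merge V i a)) * \<rho> (merge V i a) (merge V j b) * \<chi> r (merge V j b))"
      unfolding qform_def sum_basis_split[OF finX VX] ..
    also have "\<dots> = (\<Sum>i\<in>?B. \<Sum>a\<in>?O. \<Sum>j\<in>?B. \<Sum>b\<in>?O. \<Sum>l\<in>?B. \<Sum>k\<in>?B. T i l j k a b r)"
      by (intro sum.cong refl)
         (simp add: cm T_def sum_distrib_left sum_distrib_right mult_ac)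
    finally show "(\<Sum>i\<in>?B. \<Sum>a\<in>?O. \<Sum>j\<in>?B. \<Sum>b\<in>?O. \<Sum>l\<in>?B. \<Sum>k\<in>?B. T i l j k a b r) = qform X \<rho> (\<chi> r)" by simp
  qed
  finally show ?thesis by blast
qed

lemma psd_choi: "psd X' choi"
proof -
  have "Im (qform X' choi \<psi>) = 0 \<and> 0 \<le> Re (qform X' choi \<psi>)" for \<psi>
  proof -
    obtain n :: nat and \<chi> where e: "qform X' choi \<psi> = complex_of_real dimV * (\<Sum>r<n. qform X \<rho> (\<chi> r))"
      using qform_choi_eq_sum by blast
    have q: "Im (qform X \<rho> \<phi>) = 0 \<and> 0 \<le> Re (qform X \<rho> \<phi>)" for \<phi> using psd_\<rho> by (simp add: psd_def)
    have "Im (\<Sum>r<n. qform X \<rho> (\<chi> r)) = 0" unfolding Im_sum using q by simp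
    moreover have "0 \<le> Re (\<Sum>r<n. qform X \<rho> (\<chi> r))" unfolding Re_sum using q by (simp add: sum_nonneg)
    ultimately show ?thesis unfolding e using dimV_pos by simp
  qed
  thus ?thesis using op_on_choi by (simp add: psd_def)
qed

lemma Omega_representation:
  "\<exists>\<sigma> c. pdo X' \<sigma> \<and> c > 0 \<and> (\<forall>g\<in>DProg V. trace X (mult X (ext W X M) (superext V X g \<rho>)) =
      complex_of_real c * trace X' (mult X' (Omega V V') (superext V X' g \<sigma>)))"
proof -
  define c where "c = 1 + Re (trace X' choi)"
  have t0: "0 \<le> Re (trace X' choi)" using psd_trace_nonneg[OF finX' psd_choi] by simp
  have cpos: "c > 0" unfolding c_def using t0 by simp
  define \<sigma> where "\<sigma> = (\<lambda>s t. choi s t / complex_of_real c)"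
  have ps: "psd X' \<sigma>"
  proof -
    have "qform X' \<sigma> \<psi> = qform X' choi \<psi> / complex_of_real c" for \<psi>
      unfolding qform_def \<sigma>_def by (simp add: sum_divide_distrib)
    moreover have "Im (qform X' choi \<psi>) = 0 \<and> 0 \<le> Re (qform X' choi \<psi>)" for \<psi>
      using psd_choi by (simp add: psd_def)
    ultimately have "Im (qform X' \<sigma> \<psi>) = 0 \<and> 0 \<le> Re (qform X' \<sigma> \<psi>)" for \<psi>
      using cpos by (simp add: Im_divide_of_real Re_divide_of_real)
    moreover have "op_on X' \<sigma>" using op_on_choi by (simp add: op_on_def \<sigma>_def)
    ultimately show ?thesis by (simp add: psd_def)
  qed
  have "trace X' \<sigma> = trace X' choi / complex_of_real c" unfolding trace_def \<sigma>_def by (simp add: sum_divide_distrib)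
  hence "Re (trace X' \<sigma>) = Re (trace X' choi) / c" by (simp add: Re_divide_of_real)
  also have "\<dots> \<le> 1" using cpos t0 unfolding c_def by simp
  finally have pd: "pdo X' \<sigma>" using ps by (simp add: pdo_def)
  have "trace X (mult X (ext W X M) (superext V X g \<rho>)) =
      complex_of_real c * trace X' (mult X' (Omega V V') (superext V X' g \<sigma>))" if g: "g \<in> DProg V" for g
  proof -
    have "trace X' (mult X' (Omega V V') (superext V X' g \<sigma>)) = trace X' (mult X' (Omega V V') (superext V X' g choi)) / complex_of_real c"
      unfolding \<sigma>_def superext_scale[OF finV g] trace_mult_div ..
    also have "trace X' (mult X' (Omega V V') (superext V X' g choi)) = trace X (mult X (ext W X M) (superext V X g \<rho>))"
      unfolding trace_Omega_superext_choi[OF g] trace_effect_superext_coeff[OF g] ..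
    finally show ?thesis using cpos by simp
  qed
  thus ?thesis using pd cpos by blast
qed

end

abbreviation expect :: "qvar set \<Rightarrow> qop \<Rightarrow> qop \<Rightarrow> real" where
  "expect X M \<tau> \<equiv> Re (trace X (mult X M \<tau>))"

lemma cINF_affine_le:
  fixes k :: "'e \<Rightarrow> real"
  assumes ne: "E \<noteq> {}" and c: "c > 0" and lb: "\<And>e. e \<in> E \<Longrightarrow> 0 \<le> k e"
    and le: "(INF e\<in>E. k e) \<le> y"
  shows "(INF e\<in>E. a + c * k e) \<le> a + c * y"
proof -
  have bdd: "bdd_below ((\<lambda>e. a + c * k e) ` E)"
    by (rule bdd_belowI2[where m = a]) (use lb c in simp)
  have "((INF e\<in>E. a + c * k e) - a) / c \<le> (INF e\<in>E. k e)"
  proof (rule cINF_greatest[OF ne])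
    fix e assume "e \<in> E"
    with bdd have "(INF e\<in>E. a + c * k e) \<le> a + c * k e" by (rule cINF_lower)
    then show "((INF e\<in>E. a + c * k e) - a) / c \<le> k e" using c by (simp add: field_simps)
  qed
  then have "(INF e\<in>E. a + c * k e) \<le> a + c * (INF e\<in>E. k e)" using c by (simp add: field_simps)
  also have "\<dots> \<le> a + c * y" using le c by simp
  finally show ?thesis .
qed

lemma INF_INF_le_INF:
  fixes g :: "'a \<Rightarrow> 'b \<Rightarrow> real"
  assumes A: "A \<noteq> {}" and B: "B \<noteq> {}" and lb: "\<And>a b. a \<in> A \<Longrightarrow> b \<in> B \<Longrightarrow> 0 \<le> g a b"
    and le: "\<And>b. b \<in> B \<Longrightarrow> (INF a\<in>A. g a b) \<le> h b"
  shows "(INF a\<in>A. INF b\<in>B. g a b) \<le> (INF b\<in>B. h b)"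
proof (rule cINF_greatest[OF B])
  fix b assume b: "b \<in> B"
  have "(INF a\<in>A. INF b\<in>B. g a b) \<le> (INF a\<in>A. g a b)"
  proof (rule cINF_mono[OF A])
    show "bdd_below ((\<lambda>a. INF b\<in>B. g a b) ` A)"
      using B lb by (auto intro!: bdd_belowI[of _ 0] cINF_greatest)
    show "\<exists>a'\<in>A. (INF b\<in>B. g a' b) \<le> g a b" if "a \<in> A" for a
      using that b lb by (auto intro!: bexI[of _ a] cINF_lower bdd_belowI[of _ 0])
  qed
  also have "\<dots> \<le> h b" using le[OF b] .
  finally show "(INF a\<in>A. INF b\<in>B. g a b) \<le> h b" .
qed

text \<open>An empty assertion has the same demonic expectation as the assertion \<open>{I}\<close>.\<close>

definition assn_or_ident :: "qvar set \<Rightarrow> qop set \<Rightarrow> qop set" where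
  "assn_or_ident W \<Psi> = (if \<Psi> = {} then {ident W} else \<Psi>)"

lemma assn_or_ident_nonempty: "assn_or_ident W \<Psi> \<noteq> {}"
  by (simp add: assn_or_ident_def)

lemma assn_or_ident_effects:
  "finite W \<Longrightarrow> \<Psi> \<subseteq> Collect (effect W) \<Longrightarrow> N \<in> assn_or_ident W \<Psi> \<Longrightarrow> effect W N"
  by (auto simp: assn_or_ident_def split: if_splits intro: effect_ident)

lemma exp_dem_eq_INF:
  assumes "finite X" "W \<subseteq> X"
  shows "exp_dem W X \<Psi> \<tau> = (INF N\<in>assn_or_ident W \<Psi>. expect X (ext W X N) \<tau>)"
  using assms by (simp add: exp_dem_def assn_or_ident_def trace_ext_ident)

lemma exp_dem_gap_eq_INF:
  assumes X: "finite X" and WX: "W \<subseteq> X" and W: "finite W" and \<Psi>: "\<Psi> \<subseteq> Collect (effect W)"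
    and \<tau>: "psd X \<tau>"
  shows "exp_dem W X \<Psi> \<tau> + a - Re (trace X \<tau>)
    = (INF N\<in>assn_or_ident W \<Psi>. a - expect X (ext W X (minus_op (ident W) N)) \<tau>)"
proof -
  have op: "op_on X \<tau>" using \<tau> by (simp add: psd_def)
  have "bdd_below ((\<lambda>N. expect X (ext W X N) \<tau>) ` assn_or_ident W \<Psi>)"
    by (rule bdd_belowI2[where m = 0])
       (use trace_ext_effect_bounds(1)[OF X WX _ \<tau>] assn_or_ident_effects[OF W \<Psi>] in blast)
  then have "exp_dem W X \<Psi> \<tau> + a - Re (trace X \<tau>)
      = (INF N\<in>assn_or_ident W \<Psi>. (a - Re (trace X \<tau>)) + expect X (ext W X N) \<tau>)"
    unfolding exp_dem_eq_INF[OF X WX] by (simp add: Inf_add_eq assn_or_ident_nonempty)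
  also have "\<dots> = (INF N\<in>assn_or_ident W \<Psi>. a - expect X (ext W X (minus_op (ident W) N)) \<tau>)"
    by (intro INF_cong refl) (simp add: trace_ext_compl[OF X WX op])
  finally show ?thesis .
qed

lemma sadj_set_img: "sadj_set V X E {N} = (\<lambda>e. sadj X (superext V X e) N) ` E"
  by (auto simp: sadj_set_def)

lemma compl_sadj_set_img:
  "compl_set X (sadj_set V X E {N}) = (\<lambda>e. minus_op (ident X) (sadj X (superext V X e) N)) ` E"
  unfolding compl_set_def sadj_set_img image_image ..

lemma exp_dem_img:
  "E \<noteq> {} \<Longrightarrow> exp_dem W X ((\<lambda>e. A e) ` E) \<rho> = (INF e\<in>E. expect X (ext W X (A e)) \<rho>)"
  by (simp add: exp_dem_def image_image)

lemma exp_dem_single: "exp_dem W X {N} \<rho> = expect X (ext W X N) \<rho>"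
  by (simp add: exp_dem_def)

context pairing
begin

lemma expect_Omega_bounds:
  assumes e: "e \<in> DProg V" and \<sigma>: "psd X' \<sigma>"
  shows "0 \<le> expect X' (Omega V V') (superext V X' e \<sigma>)"
    "expect X' (Omega V V') (superext V X' e \<sigma>) \<le> Re (trace X' \<sigma>)"
proof -
  have sp: "psd X' (superext V X' e \<sigma>)" using DProgD(5)[OF e finX' _ \<sigma>] by simp
  show "0 \<le> expect X' (Omega V V') (superext V X' e \<sigma>)"
    using effect_trace_bounds[OF finX' effect_Omega sp] by simp
  have "expect X' (Omega V V') (superext V X' e \<sigma>) \<le> Re (trace X' (superext V X' e \<sigma>))"
    using effect_trace_bounds[OF finX' effect_Omega sp] by simp
  also have "\<dots> \<le> Re (trace X' \<sigma>)" using trace_superext_le[OF finX' _ e \<sigma>] by simp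
  finally show "expect X' (Omega V V') (superext V X' e \<sigma>) \<le> Re (trace X' \<sigma>)" .
qed

lemma trace_sadj_Omega:
  "e \<in> DProg V \<Longrightarrow> trace X' (mult X' (ext X' X' (sadj X' (superext V X' e) (Omega V V'))) \<sigma>)
     = trace X' (mult X' (Omega V V') (superext V X' e \<sigma>))"
  using trace_ext_sadj_superext[OF finX' _ _, of V X' e "Omega V V'" \<sigma>] ext_same[OF op_on_Omega] by simp

lemma sadj_set_Omega_effects:
  "E \<subseteq> DProg V \<Longrightarrow> sadj_set V X' E {Omega V V'} \<subseteq> Collect (effect X')"
  unfolding sadj_set_img
  using sadj_superext_eq_sdual[OF finX' Un_upper1] effect_sdual[OF finX' Un_upper1 _ effect_Omega]
  by auto

lemma compl_sadj_set_Omega_effects: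
  assumes "E \<subseteq> DProg V"
  shows "compl_set X' (sadj_set V X' E {Omega V V'}) \<subseteq> Collect (effect X')"
  using sadj_set_Omega_effects[OF assms] by (auto simp: compl_set_def intro: effect_compl)

lemma models_tot_sadj_Omega:
  assumes "E \<noteq> {}" and "E \<subseteq> DProg V"
  shows "models_tot V X' E (sadj_set V X' E {Omega V V'}) {Omega V V'}"
  unfolding models_tot_def sadj_set_img exp_dem_img[OF assms(1)] exp_dem_single
  using assms(2) trace_ext_sadj_superext[OF _ Un_upper1] by (auto intro!: INF_cong simp: subset_iff)

lemma models_par_sadj_Omega:
  assumes "E \<noteq> {}" and "E \<subseteq> DProg V"
  shows "models_par V X' E (compl_set X' (sadj_set V X' E {Omega V V'})) {minus_op (ident X') (Omega V V')}"
  unfolding models_par_def compl_sadj_set_img exp_dem_img[OF assms(1)] exp_dem_single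
  using assms(2) by (auto intro!: INF_cong simp: subset_iff pdo_def psd_def trace_ext_compl
      trace_ext_sadj_superext[OF _ Un_upper1])

lemma models_tot_Omega_INF_le:
  assumes H: "models_tot V X' F (sadj_set V X' E {Omega V V'}) {Omega V V'}"
    and ne: "E \<noteq> {}" and EP: "E \<subseteq> DProg V" and FP: "F \<subseteq> DProg V"
    and \<sigma>: "pdo X' \<sigma>" and f: "f \<in> F"
  shows "(INF e\<in>E. expect X' (Omega V V') (superext V X' e \<sigma>)) \<le> expect X' (Omega V V') (superext V X' f \<sigma>)"
proof -
  have ps: "psd X' \<sigma>" using \<sigma> by (simp add: pdo_def)
  have bdd: "bdd_below ((\<lambda>f. expect X' (Omega V V') (superext V X' f \<sigma>)) ` F)"
    by (rule bdd_belowI2[where m = 0]) (use FP ps expect_Omega_bounds(1) in blast)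
  have "(INF e\<in>E. expect X' (Omega V V') (superext V X' e \<sigma>)) = exp_dem X' X' (sadj_set V X' E {Omega V V'}) \<sigma>"
    unfolding sadj_set_img exp_dem_img[OF ne]
  proof (rule INF_cong[OF refl])
    fix e assume "e \<in> E"
    then show "expect X' (Omega V V') (superext V X' e \<sigma>)
        = expect X' (ext X' X' (sadj X' (superext V X' e) (Omega V V'))) \<sigma>"
      using trace_sadj_Omega[of e \<sigma>] EP by auto
  qed
  also have "\<dots> \<le> (INF f\<in>F. exp_dem X' X' {Omega V V'} (superext V X' f \<sigma>))"
    using H[unfolded models_tot_def, rule_format, of X' \<sigma>] finX' \<sigma> by simp
  also have "\<dots> \<le> expect X' (Omega V V') (superext V X' f \<sigma>)"
    unfolding exp_dem_single ext_same[OF op_on_Omega] using bdd f by (rule cINF_lower)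
  finally show ?thesis .
qed

lemma models_par_Omega_INF_le:
  assumes H: "models_par V X' F (compl_set X' (sadj_set V X' E {Omega V V'})) {minus_op (ident X') (Omega V V')}"
    and ne: "E \<noteq> {}" and EP: "E \<subseteq> DProg V" and FP: "F \<subseteq> DProg V"
    and \<sigma>: "pdo X' \<sigma>" and f: "f \<in> F"
  shows "(INF e\<in>E. Re (trace X' \<sigma>) - expect X' (Omega V V') (superext V X' e \<sigma>))
      \<le> Re (trace X' \<sigma>) - expect X' (Omega V V') (superext V X' f \<sigma>)"
proof -
  have ps: "psd X' \<sigma>" and op: "op_on X' \<sigma>" using \<sigma> by (simp_all add: pdo_def psd_def)
  have gap: "exp_dem X' X' {minus_op (ident X') (Omega V V')} (superext V X' g \<sigma>)
      + Re (trace X' \<sigma>) - Re (trace X' (superext V X' g \<sigma>))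
      = Re (trace X' \<sigma>) - expect X' (Omega V V') (superext V X' g \<sigma>)" for g
    by (simp add: exp_dem_single trace_ext_compl[OF finX' subset_refl op_on_superext] ext_same[OF op_on_Omega])
  have bdd: "bdd_below ((\<lambda>f. Re (trace X' \<sigma>) - expect X' (Omega V V') (superext V X' f \<sigma>)) ` F)"
    by (rule bdd_belowI2[where m = 0]) (use FP ps expect_Omega_bounds(2) in force)
  have "(INF e\<in>E. Re (trace X' \<sigma>) - expect X' (Omega V V') (superext V X' e \<sigma>))
      = exp_dem X' X' (compl_set X' (sadj_set V X' E {Omega V V'})) \<sigma>"
    unfolding compl_sadj_set_img exp_dem_img[OF ne]
  proof (rule INF_cong[OF refl])
    fix e assume "e \<in> E"
    then show "Re (trace X' \<sigma>) - expect X' (Omega V V') (superext V X' e \<sigma>)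
        = expect X' (ext X' X' (minus_op (ident X') (sadj X' (superext V X' e) (Omega V V')))) \<sigma>"
      using trace_sadj_Omega[of e \<sigma>] EP by (auto simp: trace_ext_compl[OF finX' subset_refl op])
  qed
  also have "\<dots> \<le> (INF f\<in>F. exp_dem X' X' {minus_op (ident X') (Omega V V')} (superext V X' f \<sigma>)
      + Re (trace X' \<sigma>) - Re (trace X' (superext V X' f \<sigma>)))"
    using H[unfolded models_par_def, rule_format, of X' \<sigma>] finX' \<sigma> by simp
  also have "\<dots> \<le> Re (trace X' \<sigma>) - expect X' (Omega V V') (superext V X' f \<sigma>)"
    unfolding gap using bdd f by (rule cINF_lower)
  finally show ?thesis .
qed

lemma models_tot_Omega_transfer:
  assumes H: "models_tot V X' F (sadj_set V X' E {Omega V V'}) {Omega V V'}"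
    and ne: "E \<noteq> {}" and EP: "E \<subseteq> DProg V" and FP: "F \<subseteq> DProg V"
    and X: "finite X" "V \<subseteq> X" "W \<subseteq> X" and N: "effect W N" and \<rho>: "pdo X \<rho>" and f: "f \<in> F"
  shows "(INF e\<in>E. expect X (ext W X N) (superext V X e \<rho>)) \<le> expect X (ext W X N) (superext V X f \<rho>)"
proof -
  interpret choi_setting V V' X W N \<rho>
    using N \<rho> X by unfold_locales (auto simp: effect_def pdo_def)
  obtain \<sigma> c where \<sigma>: "pdo X' \<sigma>" and c: "c > 0" and rep: "\<forall>g\<in>DProg V.
      trace X (mult X (ext W X N) (superext V X g \<rho>)) = complex_of_real c * trace X' (mult X' (Omega V V') (superext V X' g \<sigma>))"
    using Omega_representation by blast
  have rep': "expect X (ext W X N) (superext V X g \<rho>) = 0 + c * expect X' (Omega V V') (superext V X' g \<sigma>)"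
    if "g \<in> DProg V" for g
    using rep that by simp
  have "(INF e\<in>E. expect X (ext W X N) (superext V X e \<rho>))
      = (INF e\<in>E. 0 + c * expect X' (Omega V V') (superext V X' e \<sigma>))"
    using EP rep' by (auto intro!: INF_cong)
  also have "\<dots> \<le> 0 + c * expect X' (Omega V V') (superext V X' f \<sigma>)"
    using EP \<sigma> expect_Omega_bounds(1) models_tot_Omega_INF_le[OF H ne EP FP \<sigma> f]
    by (intro cINF_affine_le[OF ne c]) (auto simp: pdo_def)
  also have "\<dots> = expect X (ext W X N) (superext V X f \<rho>)" using rep' f FP by auto
  finally show ?thesis .
qed

lemma models_par_Omega_transfer:
  assumes H: "models_par V X' F (compl_set X' (sadj_set V X' E {Omega V V'})) {minus_op (ident X') (Omega V V')}"
    and ne: "E \<noteq> {}" and EP: "E \<subseteq> DProg V" and FP: "F \<subseteq> DProg V"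
    and X: "finite X" "V \<subseteq> X" "W \<subseteq> X" and N: "effect W N" and \<rho>: "pdo X \<rho>" and f: "f \<in> F"
  shows "(INF e\<in>E. Re (trace X \<rho>) - expect X (ext W X N) (superext V X e \<rho>))
     \<le> Re (trace X \<rho>) - expect X (ext W X N) (superext V X f \<rho>)"
proof -
  interpret choi_setting V V' X W N \<rho>
    using N \<rho> X by unfold_locales (auto simp: effect_def pdo_def)
  obtain \<sigma> c where \<sigma>: "pdo X' \<sigma>" and c: "c > 0" and rep: "\<forall>g\<in>DProg V.
      trace X (mult X (ext W X N) (superext V X g \<rho>)) = complex_of_real c * trace X' (mult X' (Omega V V') (superext V X' g \<sigma>))"
    using Omega_representation by blast
  define a where "a = Re (trace X \<rho>) - c * Re (trace X' \<sigma>)"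
  have rep': "Re (trace X \<rho>) - expect X (ext W X N) (superext V X g \<rho>)
      = a + c * (Re (trace X' \<sigma>) - expect X' (Omega V V') (superext V X' g \<sigma>))"
    if "g \<in> DProg V" for g
    using rep that by (simp add: a_def algebra_simps)
  have "(INF e\<in>E. Re (trace X \<rho>) - expect X (ext W X N) (superext V X e \<rho>))
      = (INF e\<in>E. a + c * (Re (trace X' \<sigma>) - expect X' (Omega V V') (superext V X' e \<sigma>)))"
    using EP rep' by (auto intro!: INF_cong)
  also have "\<dots> \<le> a + c * (Re (trace X' \<sigma>) - expect X' (Omega V V') (superext V X' f \<sigma>))"
    using EP \<sigma> expect_Omega_bounds(2) models_par_Omega_INF_le[OF H ne EP FP \<sigma> f]
    by (intro cINF_affine_le[OF ne c]) (auto simp: pdo_def)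
  also have "\<dots> = Re (trace X \<rho>) - expect X (ext W X N) (superext V X f \<rho>)" using rep' f FP by auto
  finally show ?thesis .
qed

lemma refines_T_if_models_tot_Omega:
  assumes H: "models_tot V X' F (sadj_set V X' E {Omega V V'}) {Omega V V'}"
    and neE: "E \<noteq> {}" and EP: "E \<subseteq> DProg V" and neF: "F \<noteq> {}" and FP: "F \<subseteq> DProg V"
  shows "refines_T V E F"
  unfolding refines_T_def models_tot_def
proof (intro allI impI)
  fix W \<Theta> \<Psi> X \<rho>
  assume W: "finite W \<and> \<Theta> \<subseteq> Collect (effect W) \<and> \<Psi> \<subseteq> Collect (effect W)"
    and HE: "\<forall>X \<rho>. finite X \<and> V \<union> W \<subseteq> X \<and> pdo X \<rho> \<longrightarrow>
      exp_dem W X \<Theta> \<rho> \<le> (INF e\<in>E. exp_dem W X \<Psi> (superext V X e \<rho>))"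
    and X: "finite X \<and> V \<union> W \<subseteq> X \<and> pdo X \<rho>"
  let ?\<Psi> = "assn_or_ident W \<Psi>"
  let ?g = "\<lambda>e N. expect X (ext W X N) (superext V X e \<rho>)"
  have XW: "finite X" "V \<subseteq> X" "W \<subseteq> X" and \<rho>: "pdo X \<rho>" using X by auto
  have eff: "effect W N" if "N \<in> ?\<Psi>" for N using assn_or_ident_effects W that by blast
  have step: "(INF e\<in>E. INF N\<in>?\<Psi>. ?g e N) \<le> (INF N\<in>?\<Psi>. ?g f N)" if f: "f \<in> F" for f
  proof (rule INF_INF_le_INF[OF neE assn_or_ident_nonempty])
    show "0 \<le> ?g e N" if "e \<in> E" "N \<in> ?\<Psi>" for e N
      using trace_ext_effect_bounds(1)[OF XW(1,3) eff[OF that(2)] DProgD(5)[OF subsetD[OF EP that(1)] XW(1,2)]] \<rho>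
      by (simp add: pdo_def)
    show "(INF e\<in>E. ?g e N) \<le> ?g f N" if "N \<in> ?\<Psi>" for N
      by (rule models_tot_Omega_transfer[OF H neE EP FP XW eff[OF that] \<rho> f])
  qed
  have "exp_dem W X \<Theta> \<rho> \<le> (INF e\<in>E. INF N\<in>?\<Psi>. ?g e N)"
    using HE[rule_format, OF X] unfolding exp_dem_eq_INF[OF XW(1,3)] .
  also have "\<dots> \<le> (INF f\<in>F. INF N\<in>?\<Psi>. ?g f N)" by (rule cINF_greatest[OF neF step])
  finally show "exp_dem W X \<Theta> \<rho> \<le> (INF f\<in>F. exp_dem W X \<Psi> (superext V X f \<rho>))"
    unfolding exp_dem_eq_INF[OF XW(1,3)] .
qed

lemma refines_P_if_models_par_Omega:
  assumes H: "models_par V X' F (compl_set X' (sadj_set V X' E {Omega V V'})) {minus_op (ident X') (Omega V V')}"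
    and neE: "E \<noteq> {}" and EP: "E \<subseteq> DProg V" and neF: "F \<noteq> {}" and FP: "F \<subseteq> DProg V"
  shows "refines_P V E F"
  unfolding refines_P_def models_par_def
proof (intro allI impI)
  fix W \<Theta> \<Psi> X \<rho>
  assume W: "finite W \<and> \<Theta> \<subseteq> Collect (effect W) \<and> \<Psi> \<subseteq> Collect (effect W)"
    and HE: "\<forall>X \<rho>. finite X \<and> V \<union> W \<subseteq> X \<and> pdo X \<rho> \<longrightarrow>
      exp_dem W X \<Theta> \<rho> \<le> (INF e\<in>E. exp_dem W X \<Psi> (superext V X e \<rho>)
        + Re (trace X \<rho>) - Re (trace X (superext V X e \<rho>)))"
    and X: "finite X \<and> V \<union> W \<subseteq> X \<and> pdo X \<rho>"
  let ?\<Psi> = "assn_or_ident W \<Psi>"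
  let ?g = "\<lambda>e N. Re (trace X \<rho>) - expect X (ext W X (minus_op (ident W) N)) (superext V X e \<rho>)"
  have XW: "finite X" "V \<subseteq> X" "W \<subseteq> X" and \<rho>: "pdo X \<rho>" and ps: "psd X \<rho>"
    using X by (auto simp: pdo_def)
  have eff: "effect W (minus_op (ident W) N)" if "N \<in> ?\<Psi>" for N
    using assn_or_ident_effects W that effect_compl by blast
  have gap: "exp_dem W X \<Psi> (superext V X g \<rho>) + Re (trace X \<rho>) - Re (trace X (superext V X g \<rho>))
      = (INF N\<in>?\<Psi>. ?g g N)" if "g \<in> DProg V" for g
    using W by (intro exp_dem_gap_eq_INF[OF XW(1,3)] DProgD(5)[OF that XW(1,2) ps]) auto
  have step: "(INF e\<in>E. INF N\<in>?\<Psi>. ?g e N) \<le> (INF N\<in>?\<Psi>. ?g f N)" if f: "f \<in> F" for f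
  proof (rule INF_INF_le_INF[OF neE assn_or_ident_nonempty])
    show "0 \<le> ?g e N" if "e \<in> E" "N \<in> ?\<Psi>" for e N
      using trace_ext_effect_bounds(2)[OF XW(1,3) eff[OF that(2)] DProgD(5)[OF subsetD[OF EP that(1)] XW(1,2) ps]]
        trace_superext_le[OF XW(1,2) subsetD[OF EP that(1)] ps]
      by linarith
    show "(INF e\<in>E. ?g e N) \<le> ?g f N" if "N \<in> ?\<Psi>" for N
      by (rule models_par_Omega_transfer[OF H neE EP FP XW eff[OF that] \<rho> f])
  qed
  have "exp_dem W X \<Theta> \<rho> \<le> (INF e\<in>E. exp_dem W X \<Psi> (superext V X e \<rho>)
      + Re (trace X \<rho>) - Re (trace X (superext V X e \<rho>)))"
    using HE[rule_format, OF X] .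
  also have "\<dots> = (INF e\<in>E. INF N\<in>?\<Psi>. ?g e N)"
    by (rule INF_cong[OF refl]) (simp add: gap subsetD[OF EP])
  also have "\<dots> \<le> (INF f\<in>F. INF N\<in>?\<Psi>. ?g f N)" by (rule cINF_greatest[OF neF step])
  also have "\<dots> = (INF f\<in>F. exp_dem W X \<Psi> (superext V X f \<rho>) + Re (trace X \<rho>) - Re (trace X (superext V X f \<rho>)))"
    by (rule INF_cong[OF refl]) (simp add: gap subsetD[OF FP])
  finally show "exp_dem W X \<Theta> \<rho> \<le> (INF f\<in>F. exp_dem W X \<Psi> (superext V X f \<rho>)
      + Re (trace X \<rho>) - Re (trace X (superext V X f \<rho>)))" .
qed

lemma refines_T_iff_models_tot_Omega:
  assumes "E \<noteq> {}" "E \<subseteq> DProg V" "F \<noteq> {}" "F \<subseteq> DProg V"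
  shows "refines_T V E F \<longleftrightarrow> models_tot V X' F (sadj_set V X' E {Omega V V'}) {Omega V V'}"
proof
  have adm: "finite X' \<and> sadj_set V X' E {Omega V V'} \<subseteq> Collect (effect X')
      \<and> {Omega V V'} \<subseteq> Collect (effect X')"
    using finX' sadj_set_Omega_effects[OF assms(2)] effect_Omega by simp
  show "refines_T V E F \<Longrightarrow> models_tot V X' F (sadj_set V X' E {Omega V V'}) {Omega V V'}"
    unfolding refines_T_def using adm models_tot_sadj_Omega[OF assms(1,2)] by (elim allE impE)
  show "models_tot V X' F (sadj_set V X' E {Omega V V'}) {Omega V V'} \<Longrightarrow> refines_T V E F"
    using refines_T_if_models_tot_Omega assms by simp
qed

lemma refines_P_iff_models_par_Omega:
  assumes "E \<noteq> {}" "E \<subseteq> DProg V" "F \<noteq> {}" "F \<subseteq> DProg V"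
  shows "refines_P V E F \<longleftrightarrow>
    models_par V X' F (compl_set X' (sadj_set V X' E {Omega V V'})) {minus_op (ident X') (Omega V V')}"
proof
  have "finite X' \<and> compl_set X' (sadj_set V X' E {Omega V V'}) \<subseteq> Collect (effect X')
      \<and> {minus_op (ident X') (Omega V V')} \<subseteq> Collect (effect X')"
    using finX' compl_sadj_set_Omega_effects[OF assms(2)] effect_compl[OF effect_Omega] by simp
  then show "refines_P V E F \<Longrightarrow>
      models_par V X' F (compl_set X' (sadj_set V X' E {Omega V V'})) {minus_op (ident X') (Omega V V')}"
    unfolding refines_P_def using models_par_sadj_Omega[OF assms(1,2)] by (elim allE impE)
  show "models_par V X' F (compl_set X' (sadj_set V X' E {Omega V V'})) {minus_op (ident X') (Omega V V')}
      \<Longrightarrow> refines_P V E F"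
    using refines_P_if_models_par_Omega assms by simp
qed

end

theorem theorem5p3:
  fixes V V' :: "qvar set" and E F :: "sop set"
  assumes "finite V" and "E \<in> NProg V" and "F \<in> NProg V"
    and "finite V'" and "card V' = card V" and "V \<inter> V' = {}"
  shows "(refines_T V E F \<longleftrightarrow>
            models_tot V (V \<union> V') F (sadj_set V (V \<union> V') E {Omega V V'}) {Omega V V'})
       \<and> (refines_P V E F \<longleftrightarrow>
            models_par V (V \<union> V') F
              (compl_set (V \<union> V') (sadj_set V (V \<union> V') E {Omega V V'}))
              {minus_op (ident (V \<union> V')) (Omega V V')})"
proof -
  interpret pairing V V'
    using assms by unfold_locales auto
  have progs: "E \<noteq> {}" "E \<subseteq> DProg V" "F \<noteq> {}" "F \<subseteq> DProg V"
    using assms(2,3) by (auto simp: NProg_def)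
  show ?thesis
    by (simp add: refines_T_iff_models_tot_Omega[OF progs] refines_P_iff_models_par_Omega[OF progs])
qed

end
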